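(* Let $G$ be a finite multigraph (no loops), let $\ell \geq 4$ be an integer, let $s$ be a vertex of $G$, and let $A \subsetneq V(G)$ with $s \notin A$ be such that $\lambda_G(x,y) \geq \ell$ for any two distinct $x,y\in A$ and such that no edge of $G$ has both endvertices outside $A$. Assume that $L(G,s,\tau_A)$ contains an independent set of size $\lceil \deg(s)/2\rceil$. If $\deg(s)$ is odd and at least $5$, then $L(G,s,\tau_A)$ is either (i) a complete bipartite graph with partition classes of sizes $(\deg(s)+1)/2$ and $(\deg(s)-1)/2$, or (ii) the disjoint union of an isolated vertex and a complete bipartite graph with two partition classes of equal size.
   Context: $\lambda_G(x,y)$ is the maximum number of pairwise edge-disjoint $x$–$y$ paths in $G$. Lifting two distinct edges $sx,sy$ means deleting them and adding a new edge $xy$. The target function $\tau_A$ assigns $\ell$ to pairs of vertices both in $A$ and $0$ otherwise; a pair of edges at $s$ is $\tau_A$-admissible if after lifting them the new graph $G'$ satisfies $\lambda_{G'}(x,y)\ge\tau_A(x,y)$ for all distinct $x,y\in V(G)\setminus\{s\}$. The lifting graph $L(G,s,\tau_A)$ has as vertices the edges incident with $s$, two being adjacent iff they form a $\tau_A$-admissible pair. *)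

theory Defs
  imports Main
begin

text \<open>Parallel edges are distinct edge identifiers.\<close>

definition multigraph :: "'v set \<Rightarrow> 'e set \<Rightarrow> ('e \<Rightarrow> 'v set) \<Rightarrow> bool" where
  "multigraph V E ends \<longleftrightarrow> finite V \<and> finite E \<and>
     (\<forall>e\<in>E. ends e \<subseteq> V \<and> card (ends e) = 2)"

definition is_path :: "'e set \<Rightarrow> ('e \<Rightarrow> 'v set) \<Rightarrow> 'v \<Rightarrow> 'v \<Rightarrow> 'e list \<Rightarrow> bool" where
  "is_path E ends x y es \<longleftrightarrow> (\<exists>vs. length vs = length es + 1 \<and> hd vs = x \<and> last vs = y \<and>
     distinct vs \<and> (\<forall>i<length es. es ! i \<in> E \<and> ends (es ! i) = {vs ! i, vs ! Suc i}))"

definition edge_conn :: "'e set \<Rightarrow> ('e \<Rightarrow> 'v set) \<Rightarrow> 'v \<Rightarrow> 'v \<Rightarrow> nat" where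
  "edge_conn E ends x y = Max {k. \<exists>P :: 'e list list. length P = k \<and>
      (\<forall>p\<in>set P. is_path E ends x y p) \<and>
      (\<forall>i<k. \<forall>j<k. i \<noteq> j \<longrightarrow> set (P ! i) \<inter> set (P ! j) = {})}"

definition degree :: "'e set \<Rightarrow> ('e \<Rightarrow> 'v set) \<Rightarrow> 'v \<Rightarrow> nat" where
  "degree E ends s = card {e\<in>E. s \<in> ends e}"

definition other_end :: "('e \<Rightarrow> 'v set) \<Rightarrow> 'v \<Rightarrow> 'e \<Rightarrow> 'v" where
  "other_end ends s e = the_elem (ends e - {s})"

definition tau :: "'v set \<Rightarrow> nat \<Rightarrow> 'v \<Rightarrow> 'v \<Rightarrow> nat" where
  "tau A l x y = (if x \<in> A \<and> y \<in> A then l else 0)"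

text \<open>Lifting the distinct edges e = sx, f = sy: delete both and add a new edge xy.
  Modelled by reusing the identifier e for the new edge xy and deleting f.\<close>
definition lift_edges :: "'e set \<Rightarrow> ('e \<Rightarrow> 'v set) \<Rightarrow> 'v \<Rightarrow> 'e \<Rightarrow> 'e \<Rightarrow> 'e set \<times> ('e \<Rightarrow> 'v set)" where
  "lift_edges E ends s e f = (E - {f}, ends(e := {other_end ends s e, other_end ends s f}))"

text \<open>Adjacency in the lifting graph L(G,s,tau_A): the vertices are the edges at s,
  two distinct ones adjacent iff they form a tau_A-admissible pair.\<close>
definition lift_adm :: "'v set \<Rightarrow> 'e set \<Rightarrow> ('e \<Rightarrow> 'v set) \<Rightarrow> 'v \<Rightarrow> 'v set \<Rightarrow> nat \<Rightarrow> 'e \<Rightarrow> 'e \<Rightarrow> bool" where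
  "lift_adm V E ends s A l e f \<longleftrightarrow> e \<in> E \<and> f \<in> E \<and> e \<noteq> f \<and> s \<in> ends e \<and> s \<in> ends f \<and>
     (\<forall>x\<in>V - {s}. \<forall>y\<in>V - {s}. x \<noteq> y \<longrightarrow>
        edge_conn (fst (lift_edges E ends s e f)) (snd (lift_edges E ends s e f)) x y \<ge> tau A l x y)"

end

theory Submission
  imports Defs
begin

(* Menger's theorem for edge-connectivity turns a non-admissible pair of edges at s into a
   dangerous set: a set Z of vertices other than s that separates A, has at most l + 1 boundary
   edges and contains the other ends of both edges. Uncrossing with the sub- and posimodularity of
   the cut function shows that no three dangerous sets can each contain the ends of two of three
   edges at s while missing the third, so by induction an independent set of ceil(deg(s)/2) edges
   has all its ends in one dangerous set X.
   Counting the edges at s then forces the complement of X to be dangerous as well, so the edges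
   into X and the edges into its complement are two independent sides of sizes (deg(s)+1)/2 and
   (deg(s)-1)/2. An edge into X and an edge into the complement fail to be admissible only if some
   dangerous set contains both ends; this happens for at most one edge into X, which is then
   non-adjacent to everything, giving the two alternatives. *)

section \<open>Cuts of a multigraph\<close>

definition crosses :: "'v set \<Rightarrow> 'v set \<Rightarrow> bool" where
  "crosses F Z \<longleftrightarrow> F \<inter> Z \<noteq> {} \<and> \<not> F \<subseteq> Z"

definition cut_edges :: "'e set \<Rightarrow> ('e \<Rightarrow> 'v set) \<Rightarrow> 'v set \<Rightarrow> 'e set" where
  "cut_edges E ends Z = {e\<in>E. crosses (ends e) Z}"

definition diagonal_edges :: "'e set \<Rightarrow> ('e \<Rightarrow> 'v set) \<Rightarrow> 'v set \<Rightarrow> 'v set \<Rightarrow> 'e set" where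
  "diagonal_edges E ends X Y = cut_edges E ends (X \<inter> Y) \<inter> cut_edges E ends (X \<union> Y)"

lemma crosses_doubleton [simp]: "crosses {p, q} Z \<longleftrightarrow> (p \<in> Z) \<noteq> (q \<in> Z)"
  by (auto simp: crosses_def)

lemma finite_cut: "finite E \<Longrightarrow> finite (cut_edges E ends Z)"
  by (simp add: cut_edges_def)

lemma cut_Diff: "cut_edges (E - F) ends Z = cut_edges E ends Z - F"
  by (auto simp: cut_edges_def)

lemma cut_complement: "\<forall>e\<in>E. ends e \<subseteq> V \<Longrightarrow> cut_edges E ends (V - Z) = cut_edges E ends Z"
  by (auto simp: cut_edges_def crosses_def)

lemma cut_edges_Compl: "cut_edges E ends (- X) = cut_edges E ends X"
  using cut_complement[of E ends UNIV X] by (simp add: Compl_eq_Diff_UNIV)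

lemma cut_Int_vertices: "\<forall>e\<in>E. ends e \<subseteq> V \<Longrightarrow> cut_edges E ends (Z \<inter> V) = cut_edges E ends Z"
  by (auto simp: cut_edges_def crosses_def)

lemma card_filter_eq_sum: "finite E \<Longrightarrow> card {e\<in>E. P e} = (\<Sum>e\<in>E. of_bool (P e))"
  using sum_of_bool_eq[of E P] by (simp add: Int_def)

lemma card_cut_eq_sum: "finite E \<Longrightarrow> card (cut_edges E ends Z) = (\<Sum>e\<in>E. of_bool (crosses (ends e) Z))"
  unfolding cut_edges_def by (rule card_filter_eq_sum)

lemma card_diagonal_edges_eq_sum:
  assumes "finite E"
  shows "card (diagonal_edges E ends X Y) =
    (\<Sum>e\<in>E. of_bool (crosses (ends e) (X \<inter> Y) \<and> crosses (ends e) (X \<union> Y)))"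
proof -
  have "diagonal_edges E ends X Y = {e\<in>E. crosses (ends e) (X \<inter> Y) \<and> crosses (ends e) (X \<union> Y)}"
    by (auto simp: diagonal_edges_def cut_edges_def)
  then show ?thesis using card_filter_eq_sum[OF assms] by simp
qed

lemma diagonal_edgesI:
  "e \<in> E \<Longrightarrow> ends e = {p, q} \<Longrightarrow> p \<in> X \<inter> Y \<Longrightarrow> q \<notin> X \<union> Y \<Longrightarrow> e \<in> diagonal_edges E ends X Y"
  by (auto simp: diagonal_edges_def cut_edges_def)

context
  fixes E :: "'e set" and ends :: "'e \<Rightarrow> 'v set"
  assumes finite_E: "finite E" and two_ended: "\<forall>e\<in>E. \<exists>p q. ends e = {p, q}"
begin

lemma sum_ends_mono:
  assumes "\<And>p q. f {p, q} \<le> g {p, q}"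
  shows "(\<Sum>e\<in>E. f (ends e)) \<le> (\<Sum>e\<in>E. (g (ends e) :: nat))"
  using two_ended assms by (intro sum_mono) fastforce

lemma sum_ends_cong:
  assumes "\<And>p q. f {p, q} = g {p, q}"
  shows "(\<Sum>e\<in>E. f (ends e)) = (\<Sum>e\<in>E. (g (ends e) :: nat))"
  using two_ended assms by (intro sum.cong) auto

lemma card_cut_submodular:
  "card (cut_edges E ends (X \<inter> Y)) + card (cut_edges E ends (X \<union> Y)) \<le>
   card (cut_edges E ends X) + card (cut_edges E ends Y)"
proof -
  have "of_bool (crosses {p, q} (X \<inter> Y)) + of_bool (crosses {p, q} (X \<union> Y))
      \<le> of_bool (crosses {p, q} X) + (of_bool (crosses {p, q} Y) :: nat)" for p q
    by (cases "p \<in> X"; cases "p \<in> Y"; cases "q \<in> X"; cases "q \<in> Y") simp_all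
  from sum_ends_mono[of "\<lambda>F. of_bool (crosses F (X \<inter> Y)) + of_bool (crosses F (X \<union> Y))"
      "\<lambda>F. of_bool (crosses F X) + of_bool (crosses F Y)", OF this]
  show ?thesis by (simp only: card_cut_eq_sum finite_E sum.distrib)
qed

lemma card_cut_posimodular:
  "card (cut_edges E ends X) + card (cut_edges E ends Y) =
   card (cut_edges E ends (X - Y)) + card (cut_edges E ends (Y - X))
   + 2 * card (diagonal_edges E ends X Y)"
proof -
  have "of_bool (crosses {p, q} X) + of_bool (crosses {p, q} Y) =
      of_bool (crosses {p, q} (X - Y)) + of_bool (crosses {p, q} (Y - X))
      + 2 * (of_bool (crosses {p, q} (X \<inter> Y) \<and> crosses {p, q} (X \<union> Y)) :: nat)" for p q
    by (cases "p \<in> X"; cases "p \<in> Y"; cases "q \<in> X"; cases "q \<in> Y") simp_all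
  from sum_ends_cong[of "\<lambda>F. of_bool (crosses F X) + of_bool (crosses F Y)"
      "\<lambda>F. of_bool (crosses F (X - Y)) + of_bool (crosses F (Y - X))
         + 2 * of_bool (crosses F (X \<inter> Y) \<and> crosses F (X \<union> Y))", OF this]
  show ?thesis
    by (simp only: card_cut_eq_sum card_diagonal_edges_eq_sum finite_E sum.distrib sum_distrib_left[symmetric])
qed

lemma card_cut_three_sets:
  "card (cut_edges E ends (X \<union> Y \<union> Z)) + card (cut_edges E ends X) + card (cut_edges E ends Y)
   + card (cut_edges E ends Z) \<le>
   card (cut_edges E ends ((X - Y) \<union> (Z - Y))) + card (cut_edges E ends ((X - Z) \<union> (Y - Z)))
   + card (cut_edges E ends ((Y - X) \<union> (Z - X)))
   + 2 * (card (diagonal_edges E ends X Y) + card (diagonal_edges E ends X Z)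
          + card (diagonal_edges E ends Y Z))"
proof -
  have "of_bool (crosses {p, q} (X \<union> Y \<union> Z)) + of_bool (crosses {p, q} X)
      + of_bool (crosses {p, q} Y) + of_bool (crosses {p, q} Z) \<le>
      of_bool (crosses {p, q} ((X - Y) \<union> (Z - Y))) + of_bool (crosses {p, q} ((X - Z) \<union> (Y - Z)))
      + of_bool (crosses {p, q} ((Y - X) \<union> (Z - X)))
      + 2 * (of_bool (crosses {p, q} (X \<inter> Y) \<and> crosses {p, q} (X \<union> Y))
             + of_bool (crosses {p, q} (X \<inter> Z) \<and> crosses {p, q} (X \<union> Z))
             + (of_bool (crosses {p, q} (Y \<inter> Z) \<and> crosses {p, q} (Y \<union> Z)) :: nat))" for p q
    by (cases "p \<in> X"; cases "p \<in> Y"; cases "p \<in> Z"; cases "q \<in> X"; cases "q \<in> Y";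
        cases "q \<in> Z") simp_all
  from sum_ends_mono[of "\<lambda>F. of_bool (crosses F (X \<union> Y \<union> Z)) + of_bool (crosses F X)
        + of_bool (crosses F Y) + of_bool (crosses F Z)"
      "\<lambda>F. of_bool (crosses F ((X - Y) \<union> (Z - Y))) + of_bool (crosses F ((X - Z) \<union> (Y - Z)))
        + of_bool (crosses F ((Y - X) \<union> (Z - X)))
        + 2 * (of_bool (crosses F (X \<inter> Y) \<and> crosses F (X \<union> Y))
               + of_bool (crosses F (X \<inter> Z) \<and> crosses F (X \<union> Z))
               + of_bool (crosses F (Y \<inter> Z) \<and> crosses F (Y \<union> Z)))", OF this]
  show ?thesis
    by (simp only: card_cut_eq_sum card_diagonal_edges_eq_sum finite_E sum.distrib sum_distrib_left[symmetric])
qed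

end

section \<open>Edge-disjoint paths\<close>

definition path_verts :: "'e set \<Rightarrow> ('e \<Rightarrow> 'v set) \<Rightarrow> 'v list \<Rightarrow> 'e list \<Rightarrow> bool" where
  "path_verts E ends vs es \<longleftrightarrow> length vs = Suc (length es) \<and> distinct vs \<and>
     (\<forall>i<length es. es ! i \<in> E \<and> ends (es ! i) = {vs ! i, vs ! Suc i})"

lemma is_path_iff_path_verts:
  "is_path E ends x y es \<longleftrightarrow> (\<exists>vs. path_verts E ends vs es \<and> hd vs = x \<and> last vs = y)"
  unfolding is_path_def path_verts_def by auto

lemma path_verts_mono: "path_verts E ends vs es \<Longrightarrow> E \<subseteq> E' \<Longrightarrow> path_verts E' ends vs es"
  by (auto simp: path_verts_def)

lemma path_verts_edges: "path_verts E ends vs es \<Longrightarrow> set es \<subseteq> E"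
  by (auto simp: path_verts_def in_set_conv_nth)

lemma path_verts_not_Nil: "path_verts E ends vs es \<Longrightarrow> vs \<noteq> []"
  by (auto simp: path_verts_def)

lemma path_verts_ends_subset:
  assumes "path_verts E ends vs es" and "g \<in> set es"
  shows "ends g \<subseteq> set vs"
proof -
  obtain i where "i < length es" "g = es ! i" using assms(2) by (auto simp: in_set_conv_nth)
  with assms(1) show ?thesis by (auto simp: path_verts_def)
qed

lemma path_verts_butlast:
  assumes "path_verts E ends vs es" "es \<noteq> []"
  shows "path_verts E ends (butlast vs) (butlast es)"
  using assms by (auto simp: path_verts_def nth_butlast distinct_butlast)

lemma path_verts_rev:
  assumes p: "path_verts E ends vs es"
  shows "path_verts E ends (rev vs) (rev es)"
proof -
  let ?n = "length es"
  have len: "length vs = Suc ?n" using p by (simp add: path_verts_def)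
  have "rev es ! i \<in> E \<and> ends (rev es ! i) = {rev vs ! i, rev vs ! Suc i}" if i: "i < ?n" for i
  proof -
    have "es ! (?n - Suc i) \<in> E \<and> ends (es ! (?n - Suc i)) = {vs ! (?n - Suc i), vs ! Suc (?n - Suc i)}"
      using p i by (simp add: path_verts_def)
    moreover have "Suc (?n - Suc i) = ?n - i" using i by simp
    ultimately show ?thesis using i len by (simp add: rev_nth insert_commute)
  qed
  then show ?thesis using p len by (simp add: path_verts_def)
qed

lemma path_verts_append:
  assumes p1: "path_verts E ends vs1 es1" and p2: "path_verts E ends vs2 es2"
    and c: "c \<in> E" "ends c = {last vs1, hd vs2}" and disj: "set vs1 \<inter> set vs2 = {}"
  shows "path_verts E ends (vs1 @ vs2) (es1 @ c # es2)"
proof -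
  have l1: "length vs1 = Suc (length es1)" and l2: "length vs2 = Suc (length es2)"
    using p1 p2 by (auto simp: path_verts_def)
  have "(es1 @ c # es2) ! i \<in> E \<and> ends ((es1 @ c # es2) ! i) = {(vs1 @ vs2) ! i, (vs1 @ vs2) ! Suc i}"
    if i: "i < length (es1 @ c # es2)" for i
  proof (cases "i < length es1")
    case True
    then show ?thesis using p1 l1 by (simp add: path_verts_def nth_append)
  next
    case False
    show ?thesis
    proof (cases "i = length es1")
      case True
      moreover have "vs1 \<noteq> []" "vs2 \<noteq> []" using l1 l2 by auto
      ultimately show ?thesis using c l1 by (simp add: nth_append last_conv_nth hd_conv_nth)
    next
      case False
      define j where "j = i - Suc (length es1)"
      have j: "i = Suc (length es1) + j" "j < length es2"
        using i False \<open>\<not> i < length es1\<close> by (auto simp: j_def)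
      then show ?thesis using p2 l1 by (simp add: path_verts_def nth_append)
    qed
  qed
  then show ?thesis using p1 p2 l1 l2 disj by (simp add: path_verts_def)
qed

lemma path_verts_crosses_cut:
  assumes p: "path_verts E ends vs es" and "hd vs \<in> Z" "last vs \<notin> Z"
  shows "\<exists>e\<in>set es. e \<in> cut_edges E ends Z"
proof -
  let ?n = "length es"
  have len: "length vs = Suc ?n" using p by (simp add: path_verts_def)
  have "vs ! 0 \<in> Z" "vs ! ?n \<notin> Z"
    using assms len path_verts_not_Nil[OF p] by (simp_all add: hd_conv_nth last_conv_nth)
  then obtain i where i: "i < ?n" "vs ! i \<in> Z" "vs ! Suc i \<notin> Z"
    using ex_least_nat_less[of "\<lambda>i. vs ! i \<notin> Z" ?n] by auto
  then have "es ! i \<in> cut_edges E ends Z" using p by (auto simp: path_verts_def cut_edges_def)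
  then show ?thesis using i(1) by auto
qed

lemma is_path_mono: "is_path E ends a b p \<Longrightarrow> E \<subseteq> E' \<Longrightarrow> is_path E' ends a b p"
  unfolding is_path_iff_path_verts using path_verts_mono by blast

lemma is_path_edges: "is_path E ends a b p \<Longrightarrow> set p \<subseteq> E"
  unfolding is_path_iff_path_verts using path_verts_edges by blast

lemma is_path_rev: "is_path E ends a b p \<Longrightarrow> is_path E ends b a (rev p)"
  unfolding is_path_iff_path_verts
  by (metis path_verts_rev hd_rev last_rev)

definition edge_disjoint :: "'e list list \<Rightarrow> bool" where
  "edge_disjoint P \<longleftrightarrow> (\<forall>i<length P. \<forall>j<length P. i \<noteq> j \<longrightarrow> set (P ! i) \<inter> set (P ! j) = {})"

lemma edge_disjoint_Cons:
  "edge_disjoint (q # P) \<longleftrightarrow> edge_disjoint P \<and> (\<forall>p\<in>set P. set q \<inter> set p = {})"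
proof -
  have "edge_disjoint (q # P) \<longleftrightarrow>
      edge_disjoint P \<and> (\<forall>j<length P. set q \<inter> set (P ! j) = {} \<and> set (P ! j) \<inter> set q = {})"
    unfolding edge_disjoint_def by (simp add: All_less_Suc2) blast
  then show ?thesis by (auto simp: all_set_conv_all_nth)
qed

definition has_disjoint_paths :: "'e set \<Rightarrow> ('e \<Rightarrow> 'v set) \<Rightarrow> 'v \<Rightarrow> 'v \<Rightarrow> nat \<Rightarrow> bool" where
  "has_disjoint_paths E ends a b k \<longleftrightarrow>
     (\<exists>P. length P = k \<and> (\<forall>p\<in>set P. is_path E ends a b p) \<and> edge_disjoint P)"

lemma edge_conn_eq_Max: "edge_conn E ends a b = Max {k. has_disjoint_paths E ends a b k}"
proof -
  have "{k. has_disjoint_paths E ends a b k} = {k. \<exists>P. length P = k \<and> (\<forall>p\<in>set P. is_path E ends a b p) \<and>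
      (\<forall>i<k. \<forall>j<k. i \<noteq> j \<longrightarrow> set (P ! i) \<inter> set (P ! j) = {})}"
    by (auto simp: has_disjoint_paths_def edge_disjoint_def)
  then show ?thesis by (simp add: edge_conn_def)
qed

lemma has_disjoint_paths_le_card_cut:
  assumes "finite E" and "has_disjoint_paths E ends a b k" and "a \<in> Z" "b \<notin> Z"
  shows "k \<le> card (cut_edges E ends Z)"
proof -
  obtain P where P: "length P = k" "\<forall>p\<in>set P. is_path E ends a b p" "edge_disjoint P"
    using assms(2) by (auto simp: has_disjoint_paths_def)
  have "\<exists>e. e \<in> set (P ! i) \<and> e \<in> cut_edges E ends Z" if "i < k" for i
  proof -
    have "is_path E ends a b (P ! i)" using that P(1,2) nth_mem[of i P] by simp
    then obtain vs where "path_verts E ends vs (P ! i)" "hd vs = a" "last vs = b"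
      unfolding is_path_iff_path_verts by blast
    then show ?thesis using path_verts_crosses_cut[of E ends vs "P ! i" Z] assms(3,4) by auto
  qed
  then obtain c where c: "\<And>i. i < k \<Longrightarrow> c i \<in> set (P ! i) \<and> c i \<in> cut_edges E ends Z" by metis
  have "inj_on c {..<k}"
  proof (rule inj_onI)
    fix i j assume ij: "i \<in> {..<k}" "j \<in> {..<k}" "c i = c j"
    show "i = j"
    proof (rule ccontr)
      assume "i \<noteq> j"
      then have "set (P ! i) \<inter> set (P ! j) = {}" using ij(1,2) P(1,3) by (simp add: edge_disjoint_def)
      then show False using c[of i] c[of j] ij by auto
    qed
  qed
  moreover have "c ` {..<k} \<subseteq> cut_edges E ends Z" using c by auto
  ultimately have "card (c ` {..<k}) \<le> card (cut_edges E ends Z)"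
    by (intro card_mono finite_cut assms(1))
  then show ?thesis using card_image[OF \<open>inj_on c {..<k}\<close>] by simp
qed

lemma has_disjoint_paths_0: "has_disjoint_paths E ends a b 0"
  by (auto simp: has_disjoint_paths_def edge_disjoint_def)

lemma edge_conn_le_card_cut:
  assumes "finite E" "a \<in> Z" "b \<notin> Z"
  shows "edge_conn E ends a b \<le> card (cut_edges E ends Z)"
proof -
  have "finite {k. has_disjoint_paths E ends a b k}"
    using has_disjoint_paths_le_card_cut[OF assms(1) _ assms(2,3)] by (auto simp: finite_nat_set_iff_bounded_le)
  then show ?thesis
    using Max_in has_disjoint_paths_0 has_disjoint_paths_le_card_cut[OF assms(1) _ assms(2,3)]
    by (fastforce simp: edge_conn_eq_Max)
qed

lemma edge_conn_geI:
  assumes "finite E" "a \<noteq> b" "has_disjoint_paths E ends a b k"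
  shows "k \<le> edge_conn E ends a b"
proof -
  have "finite {k. has_disjoint_paths E ends a b k}"
    using has_disjoint_paths_le_card_cut[OF assms(1), of ends a b _ "{a}"] assms(2)
    by (auto simp: finite_nat_set_iff_bounded_le)
  then show ?thesis using assms(3) by (simp add: edge_conn_eq_Max)
qed

lemma has_disjoint_paths_insert:
  assumes "has_disjoint_paths (E - F) ends a b k" "is_path E ends a b q" "set q \<subseteq> F"
  shows "has_disjoint_paths E ends a b (Suc k)"
proof -
  obtain P where P: "length P = k" "\<forall>p\<in>set P. is_path (E - F) ends a b p" "edge_disjoint P"
    using assms(1) unfolding has_disjoint_paths_def by blast
  have "set q \<inter> set p = {}" if "p \<in> set P" for p
  proof -
    have "set p \<subseteq> E - F" using P(2) that is_path_edges[of "E - F" ends a b p] by simp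
    then show ?thesis using assms(3) by blast
  qed
  moreover have "is_path E ends a b p" if "p \<in> set P" for p
    using P(2) that is_path_mono[of "E - F" ends a b p E] by auto
  ultimately show ?thesis using P assms(2) unfolding has_disjoint_paths_def
    by (intro exI[of _ "q # P"]) (simp add: edge_disjoint_Cons)
qed

lemma has_disjoint_paths_mono:
  assumes "has_disjoint_paths E' ends a b k" "E' \<subseteq> E"
  shows "has_disjoint_paths E ends a b k"
  using assms is_path_mono unfolding has_disjoint_paths_def by metis

lemma has_disjoint_paths_swap:
  assumes "has_disjoint_paths E ends a b k"
  shows "has_disjoint_paths E ends b a k"
proof -
  obtain P where P: "length P = k" "\<forall>p\<in>set P. is_path E ends a b p" "edge_disjoint P"
    using assms unfolding has_disjoint_paths_def by blast
  have "is_path E ends b a (rev p)" if "p \<in> set P" for p using P(2) that by (simp add: is_path_rev)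
  then have "\<forall>p\<in>set (map rev P). is_path E ends b a p" by simp
  moreover have "edge_disjoint (map rev P)" using P(3) by (simp add: edge_disjoint_def)
  ultimately show ?thesis using P(1) unfolding has_disjoint_paths_def by (intro exI[of _ "map rev P"]) simp
qed

section \<open>Menger's theorem for edge-connectivity\<close>

definition separating_cuts_ge :: "'e set \<Rightarrow> ('e \<Rightarrow> 'v set) \<Rightarrow> 'v \<Rightarrow> 'v \<Rightarrow> nat \<Rightarrow> bool" where
  "separating_cuts_ge E ends a b k \<longleftrightarrow> (\<forall>Z. a \<in> Z \<longrightarrow> b \<notin> Z \<longrightarrow> k \<le> card (cut_edges E ends Z))"

lemma separating_cuts_ge_Diff:
  assumes "finite E" "separating_cuts_ge E ends a b (Suc k)"
    and "\<And>Z. a \<in> Z \<Longrightarrow> b \<notin> Z \<Longrightarrow> \<exists>f. cut_edges E ends Z \<inter> F \<subseteq> {f}"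
  shows "separating_cuts_ge (E - F) ends a b k"
  unfolding separating_cuts_ge_def
proof (intro allI impI)
  fix Z assume Z: "a \<in> Z" "b \<notin> Z"
  have "card (cut_edges E ends Z \<inter> F) \<le> 1"
    using assms(3)[OF Z] card_mono[of "{_}"] by fastforce
  moreover have "card (cut_edges (E - F) ends Z) = card (cut_edges E ends Z) - card (cut_edges E ends Z \<inter> F)"
    by (simp add: cut_Diff card_Diff_subset_Int finite_cut assms(1))
  ultimately show "k \<le> card (cut_edges (E - F) ends Z)"
    using assms(2) Z by (fastforce simp: separating_cuts_ge_def)
qed

lemma has_disjoint_paths_Suc_via_path:
  assumes "finite E" "separating_cuts_ge E ends a b (Suc k)" "is_path E ends a b q"
    and "\<And>Z. a \<in> Z \<Longrightarrow> b \<notin> Z \<Longrightarrow> \<exists>f. cut_edges E ends Z \<inter> set q \<subseteq> {f}"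
    and "separating_cuts_ge (E - set q) ends a b k \<Longrightarrow> has_disjoint_paths (E - set q) ends a b k"
  shows "has_disjoint_paths E ends a b (Suc k)"
  using has_disjoint_paths_insert[OF assms(5)[OF separating_cuts_ge_Diff[OF assms(1,2,4)]] assms(3)]
  by simp

lemma critical_edge_in_tight_cut:
  assumes "finite E" "separating_cuts_ge E ends a b k" "\<not> separating_cuts_ge (E - {e}) ends a b k"
  obtains X where "a \<in> X" "b \<notin> X" "card (cut_edges E ends X) = k" "e \<in> cut_edges E ends X"
proof -
  obtain X where X: "a \<in> X" "b \<notin> X" "card (cut_edges (E - {e}) ends X) < k"
    using assms(3) by (auto simp: separating_cuts_ge_def not_le)
  have ge: "k \<le> card (cut_edges E ends X)" using assms(2) X(1,2) by (simp add: separating_cuts_ge_def)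
  have "e \<in> cut_edges E ends X"
  proof (rule ccontr)
    assume "e \<notin> cut_edges E ends X"
    then have "cut_edges (E - {e}) ends X = cut_edges E ends X" by (auto simp: cut_Diff)
    then show False using X(3) ge by simp
  qed
  moreover have "card (cut_edges (E - {e}) ends X) = card (cut_edges E ends X) - 1"
    using calculation by (simp only: cut_Diff card_Diff_singleton finite_cut[OF assms(1)])
  then have "card (cut_edges E ends X) = k" using X(3) ge by arith
  ultimately show thesis using that X(1,2) by blast
qed

lemma short_path_if_all_edges_meet_ends:
  assumes two: "\<forall>e\<in>E. \<exists>p q. ends e = {p, q}" and "a \<noteq> b" and cuts: "separating_cuts_ge E ends a b (Suc k)"
    and meet: "\<forall>e\<in>E. ends e \<inter> {a, b} \<noteq> {}" and direct: "\<forall>e\<in>E. ends e \<noteq> {a, b}"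
  shows "\<exists>e1\<in>E. \<exists>e2\<in>E. \<exists>v. v \<noteq> a \<and> v \<noteq> b \<and> ends e1 = {a, v} \<and> ends e2 = {v, b}"
proof -
  define Z where "Z = insert a {v. \<exists>g\<in>E. ends g = {a, v}}"
  have "b \<notin> Z"
  proof
    assume "b \<in> Z"
    then obtain g where "g \<in> E" "ends g = {a, b}" using \<open>a \<noteq> b\<close> by (auto simp: Z_def)
    then show False using direct by simp
  qed
  then have "Suc k \<le> card (cut_edges E ends Z)" using cuts by (simp add: separating_cuts_ge_def Z_def)
  then have "cut_edges E ends Z \<noteq> {}" by auto
  then obtain g where g: "g \<in> E" "crosses (ends g) Z" by (auto simp: cut_edges_def)
  obtain p q where pq: "ends g = {p, q}" using two g(1) by blast
  have "a \<notin> ends g"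
  proof
    assume "a \<in> ends g"
    then obtain r where r: "ends g = {a, r}" using pq by auto
    then have "r \<in> Z" using g(1) by (auto simp: Z_def)
    then show False using g(2) r by (simp add: Z_def)
  qed
  moreover have "b \<in> ends g" using meet g(1) calculation by auto
  then have "b = p \<or> b = q" using pq by auto
  define r where "r = (if b = p then q else p)"
  have r: "ends g = {r, b}" "r \<noteq> a"
    using pq \<open>b = p \<or> b = q\<close> \<open>a \<notin> ends g\<close> by (auto simp: r_def insert_commute)
  then have "r \<in> Z" using g(2) \<open>b \<notin> Z\<close> by simp
  then obtain g' where g': "g' \<in> E" "ends g' = {a, r}" using r(2) by (auto simp: Z_def)
  then have "r \<noteq> b" using direct by auto
  with g' g(1) r show ?thesis
    by (intro bexI[where x = g'] bexI[where x = g] exI[where x = r] conjI) simp_all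
qed

lemma separating_cuts_ge_cases:
  assumes two: "\<forall>e\<in>E. \<exists>p q. ends e = {p, q}" and "a \<noteq> b" and "separating_cuts_ge E ends a b (Suc k)"
  obtains (direct) e where "e \<in> E" "ends e = {a, b}"
    | (via) e1 e2 v where "e1 \<in> E" "e2 \<in> E" "v \<noteq> a" "v \<noteq> b" "ends e1 = {a, v}" "ends e2 = {v, b}"
    | (inner) e where "e \<in> E" "ends e \<inter> {a, b} = {}"
proof (cases "\<exists>e\<in>E. ends e \<inter> {a, b} = {}")
  case True
  then show ?thesis using inner by blast
next
  case meet: False
  show ?thesis
  proof (cases "\<exists>e\<in>E. ends e = {a, b}")
    case True
    then show ?thesis using direct by blast
  next
    case False
    then obtain e1 e2 v where "e1 \<in> E" "e2 \<in> E" "v \<noteq> a" "v \<noteq> b" "ends e1 = {a, v}" "ends e2 = {v, b}"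
      using short_path_if_all_edges_meet_ends[OF assms] meet by auto
    then show ?thesis by (rule via)
  qed
qed

lemma ends_in_vertices:
  assumes "separating_cuts_ge E ends a b (Suc k)" "a \<noteq> b"
  shows "a \<in> \<Union>(ends ` E)" "b \<in> \<Union>(ends ` E)"
proof -
  have "Suc k \<le> card (cut_edges E ends {a})" "Suc k \<le> card (cut_edges E ends (- {b}))"
    using assms by (simp_all add: separating_cuts_ge_def)
  then have "cut_edges E ends {a} \<noteq> {}" "cut_edges E ends (- {b}) \<noteq> {}" by auto
  then show "a \<in> \<Union>(ends ` E)" "b \<in> \<Union>(ends ` E)" by (auto simp: cut_edges_def crosses_def)
qed

definition graph_size :: "'e set \<Rightarrow> ('e \<Rightarrow> 'v set) \<Rightarrow> nat" where
  "graph_size E ends = card E + card (\<Union>(ends ` E))"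

lemma graph_size_Diff_less:
  assumes "finite E" "\<forall>e\<in>E. finite (ends e)" "e \<in> E" "e \<in> F"
  shows "graph_size (E - F) ends < graph_size E ends"
proof -
  have "card (E - F) < card E" using assms by (intro psubset_card_mono) auto
  moreover have "card (\<Union>(ends ` (E - F))) \<le> card (\<Union>(ends ` E))"
    using assms(1,2) by (intro card_mono) auto
  ultimately show ?thesis by (simp add: graph_size_def)
qed

(* Contracting the complement of X into b keeps every edge; edges outside X become loops {b},
   which is why edges are only assumed to satisfy ends e = {p, q}, possibly with p = q. *)
definition contract_outside :: "'v set \<Rightarrow> 'v \<Rightarrow> ('e \<Rightarrow> 'v set) \<Rightarrow> 'e \<Rightarrow> 'v set" where
  "contract_outside X b ends e = (\<lambda>w. if w \<in> X then w else b) ` ends e"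

lemma two_ended_contract_outside:
  assumes "\<forall>e\<in>E. \<exists>p q. ends e = {p, q}"
  shows "\<forall>e\<in>E. \<exists>p q. contract_outside X b ends e = {p, q}"
proof
  fix e assume "e \<in> E"
  then obtain p q where "ends e = {p, q}" using assms by blast
  then show "\<exists>p q. contract_outside X b ends e = {p, q}"
    unfolding contract_outside_def by (intro exI) (simp only: image_insert image_empty)
qed

lemma crosses_contract_outside:
  "crosses ((\<lambda>w. if w \<in> X then w else b) ` F) Z \<longleftrightarrow> crosses F (if b \<in> Z then Z \<union> - X else Z \<inter> X)"
  unfolding crosses_def by auto

lemma cut_contract_outside_notin:
  "b \<notin> Z \<Longrightarrow> cut_edges E (contract_outside X b ends) Z = cut_edges E ends (Z \<inter> X)"
  unfolding cut_edges_def contract_outside_def crosses_contract_outside by simp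

lemma cut_contract_outside_in:
  "b \<in> Z \<Longrightarrow> cut_edges E (contract_outside X b ends) Z = cut_edges E ends (Z \<union> - X)"
  unfolding cut_edges_def contract_outside_def crosses_contract_outside by simp

lemma separating_cuts_ge_contract_outside:
  assumes "separating_cuts_ge E ends a b k" "a \<in> X" "b \<notin> X"
  shows "separating_cuts_ge E (contract_outside X b ends) a b k"
    and "separating_cuts_ge E (contract_outside (- X) a ends) a b k"
proof -
  show "separating_cuts_ge E (contract_outside X b ends) a b k"
    using assms unfolding separating_cuts_ge_def
    by (metis IntI cut_contract_outside_notin Int_iff)
  show "separating_cuts_ge E (contract_outside (- X) a ends) a b k"
    using assms unfolding separating_cuts_ge_def
    by (metis UnI1 Un_iff cut_contract_outside_in double_complement)
qed

lemma graph_size_contract_outside_less: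
  assumes "finite (\<Union>(ends ` E))" "2 \<le> card (\<Union>(ends ` E) - X)"
  shows "graph_size E (contract_outside X b ends) < graph_size E ends"
proof -
  let ?U = "\<Union>(ends ` E)"
  have "\<Union>(contract_outside X b ends ` E) \<subseteq> insert b (?U \<inter> X)"
    by (auto simp: contract_outside_def)
  then have "card (\<Union>(contract_outside X b ends ` E)) \<le> card (insert b (?U \<inter> X))"
    using assms(1) by (intro card_mono) auto
  also have "\<dots> \<le> Suc (card (?U \<inter> X))" using assms(1) by (simp add: card_insert_if)
  moreover have "card ?U = card (?U \<inter> X) + card (?U - X)" using assms(1) by (rule card_Int_Diff)
  ultimately show ?thesis using assms(2) by (simp add: graph_size_def)
qed

lemma two_vertices_on_each_side:
  assumes "finite (\<Union>(ends ` E))" "separating_cuts_ge E ends a b (Suc k)" "a \<noteq> b"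
    and e: "e \<in> cut_edges E ends X" "ends e \<inter> {a, b} = {}" and X: "a \<in> X" "b \<notin> X"
  shows "2 \<le> card (\<Union>(ends ` E) \<inter> X)" "2 \<le> card (\<Union>(ends ` E) - X)"
proof -
  let ?U = "\<Union>(ends ` E)"
  have "ends e \<inter> X \<noteq> {}" "\<not> ends e \<subseteq> X" "e \<in> E" using e(1) by (simp_all add: cut_edges_def crosses_def)
  then obtain u v where uv: "u \<in> ends e" "u \<in> X" "v \<in> ends e" "v \<notin> X" by blast
  have "u \<noteq> a" "v \<noteq> b" using uv(1,3) e(2) by auto
  moreover have "a \<in> ?U" "b \<in> ?U" using ends_in_vertices[OF assms(2,3)] by simp_all
  moreover have "u \<in> ?U" "v \<in> ?U" using uv(1,3) \<open>e \<in> E\<close> by auto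
  ultimately have "{u, a} \<subseteq> ?U \<inter> X" "{v, b} \<subseteq> ?U - X" "card {u, a} = 2" "card {v, b} = 2"
    using uv(2,4) X by auto
  then show "2 \<le> card (?U \<inter> X)" "2 \<le> card (?U - X)"
    using card_mono[of "?U \<inter> X" "{u, a}"] card_mono[of "?U - X" "{v, b}"] assms(1) by simp_all
qed

lemma contract_outside_inside_edge:
  assumes "ends e = {p, q}" "contract_outside X b ends e = {x, y}" "x \<in> X" "y \<in> X" "b \<notin> X"
  shows "ends e = {x, y}"
proof -
  let ?f = "\<lambda>w. if w \<in> X then w else b"
  have "?f p \<in> X" "?f q \<in> X" using assms(1-4) by (auto simp: contract_outside_def)
  then have "p \<in> X" "q \<in> X" using assms(5) by (auto split: if_splits)
  then show ?thesis using assms(1,2) by (simp add: contract_outside_def)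
qed

lemma contract_outside_boundary_edge:
  assumes "ends e = {p, q}" "contract_outside X b ends e = {x, b}" "x \<in> X" "b \<notin> X"
  shows "\<exists>w. w \<notin> X \<and> ends e = {x, w}"
proof -
  let ?f = "\<lambda>w. if w \<in> X then w else b"
  have fpq: "{?f p, ?f q} = {x, b}"
    using assms(1,2) by (simp only: contract_outside_def image_insert image_empty)
  have "x \<noteq> b" using assms(3,4) by auto
  show ?thesis
  proof (cases "p \<in> X")
    case True
    then have "p = x" "q \<notin> X" using fpq \<open>x \<noteq> b\<close> assms(4) by (auto simp: doubleton_eq_iff split: if_splits)
    then show ?thesis using assms(1) by blast
  next
    case False
    then have "q = x" using fpq \<open>x \<noteq> b\<close> by (auto simp: doubleton_eq_iff split: if_splits)
    then show ?thesis using assms(1) False by blast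
  qed
qed

lemma path_verts_uncontract:
  assumes p: "path_verts E (contract_outside X b ends) vs es" and X: "set vs \<subseteq> X" "b \<notin> X"
    and two: "\<forall>e\<in>E. \<exists>p q. ends e = {p, q}"
  shows "path_verts E ends vs es"
  unfolding path_verts_def
proof (intro conjI allI impI)
  show "length vs = Suc (length es)" "distinct vs" using p by (simp_all add: path_verts_def)
  fix i assume i: "i < length es"
  then have step: "es ! i \<in> E" "contract_outside X b ends (es ! i) = {vs ! i, vs ! Suc i}"
    using p by (simp_all add: path_verts_def)
  have "vs ! i \<in> X" "vs ! Suc i \<in> X"
    using i p X(1) nth_mem[of i vs] nth_mem[of "Suc i" vs] by (auto simp: path_verts_def)
  moreover obtain p q where "ends (es ! i) = {p, q}" using two step(1) by blast
  ultimately show "es ! i \<in> E" "ends (es ! i) = {vs ! i, vs ! Suc i}"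
    using contract_outside_inside_edge[where ends = ends and e = "es ! i"] step X(2) by simp_all
qed

lemma is_path_contract_outside_split:
  assumes "is_path E (contract_outside X b ends) a b p" and two: "\<forall>e\<in>E. \<exists>p q. ends e = {p, q}"
    and "a \<in> X" and b: "b \<notin> X"
  obtains us where "p \<noteq> []" "path_verts E ends us (butlast p)" "hd us = a" "set us \<subseteq> X"
    "last p \<in> cut_edges E ends X" "last us \<in> ends (last p)"
proof -
  obtain vs where vs: "path_verts E (contract_outside X b ends) vs p" "hd vs = a" "last vs = b"
    using assms(1) by (auto simp: is_path_iff_path_verts)
  let ?n = "length p"
  have len: "length vs = Suc ?n" and dist: "distinct vs"
    and step: "\<And>i. i < ?n \<Longrightarrow> p ! i \<in> E \<and> contract_outside X b ends (p ! i) = {vs ! i, vs ! Suc i}"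
    using vs(1) by (auto simp: path_verts_def)
  have "vs \<noteq> []" using len by auto
  then have vs_n: "vs ! ?n = b" using vs(3) len by (simp add: last_conv_nth)
  have "p \<noteq> []" using vs(2) \<open>a \<in> X\<close> b vs_n \<open>vs \<noteq> []\<close> by (auto simp: hd_conv_nth)
  have inX: "vs ! i \<in> X" if "i < ?n" for i
  proof -
    have "vs ! i \<in> contract_outside X b ends (p ! i)" using step[OF that] by simp
    moreover have "vs ! i \<noteq> vs ! ?n" using nth_eq_iff_index_eq[OF dist, of i ?n] that len by simp
    ultimately show ?thesis using vs_n by (auto simp: contract_outside_def split: if_splits)
  qed
  let ?us = "butlast vs"
  have len_us: "length ?us = ?n" using len by simp
  have us_X: "set ?us \<subseteq> X" using inX len by (auto simp: in_set_conv_nth nth_butlast)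
  have path: "path_verts E ends ?us (butlast p)"
    using path_verts_uncontract[OF path_verts_butlast[OF vs(1) \<open>p \<noteq> []\<close>] us_X b two] .
  have "?us \<noteq> []" using len_us \<open>p \<noteq> []\<close> by (metis length_0_conv)
  then have "hd ?us = a" using vs(2) len \<open>vs \<noteq> []\<close> \<open>p \<noteq> []\<close> nth_butlast[of 0 vs] by (simp add: hd_conv_nth)
  define m where "m = ?n - 1"
  have m: "m < ?n" "Suc m = ?n" "last p = p ! m" using \<open>p \<noteq> []\<close> by (auto simp: m_def last_conv_nth)
  have last_us: "last ?us = vs ! m"
    using \<open>?us \<noteq> []\<close> len_us len nth_butlast[of m vs] m(1) by (simp add: last_conv_nth m_def)
  have "last p \<in> E" and contr: "contract_outside X b ends (last p) = {vs ! m, b}"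
    using step[OF m(1)] m(2,3) vs_n by simp_all
  obtain p' q' where "ends (last p) = {p', q'}" using two \<open>last p \<in> E\<close> by blast
  from contract_outside_boundary_edge[where ends = ends and e = "last p", OF this contr inX[OF m(1)] b]
  obtain w where "w \<notin> X" "ends (last p) = {vs ! m, w}" by blast
  then have "last p \<in> cut_edges E ends X" "last ?us \<in> ends (last p)"
    using \<open>last p \<in> E\<close> inX[OF m(1)] last_us by (simp_all add: cut_edges_def)
  with \<open>p \<noteq> []\<close> path \<open>hd ?us = a\<close> us_X show thesis by (rule that)
qed

definition fan_to_cut ::
  "'e set \<Rightarrow> ('e \<Rightarrow> 'v set) \<Rightarrow> 'v set \<Rightarrow> 'v \<Rightarrow> ('e \<Rightarrow> 'v list) \<Rightarrow> ('e \<Rightarrow> 'e list) \<Rightarrow> bool" where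
  "fan_to_cut E ends X a us es \<longleftrightarrow>
     (\<forall>c\<in>cut_edges E ends X. path_verts E ends (us c) (es c) \<and> hd (us c) = a \<and> set (us c) \<subseteq> X \<and>
        last (us c) \<in> ends c) \<and>
     (\<forall>c\<in>cut_edges E ends X. \<forall>c'\<in>cut_edges E ends X. c \<noteq> c' \<longrightarrow> set (es c) \<inter> set (es c') = {})"

lemma fan_to_cut_inside:
  assumes "fan_to_cut E ends X a us es" "c \<in> cut_edges E ends X" "g \<in> set (es c)"
  shows "ends g \<subseteq> X"
  using assms path_verts_ends_subset[of E ends "us c" "es c" g] by (auto simp: fan_to_cut_def)

lemma edge_disjoint_index_by_last:
  assumes P: "edge_disjoint P" "\<forall>p\<in>set P. p \<noteq> [] \<and> last p \<in> C" and C: "finite C" "card C = length P"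
  obtains idx where "\<And>c. c \<in> C \<Longrightarrow> idx c < length P \<and> last (P ! idx c) = c"
    "\<And>c c'. c \<in> C \<Longrightarrow> c' \<in> C \<Longrightarrow> c \<noteq> c' \<Longrightarrow> set (P ! idx c) \<inter> set (P ! idx c') = {}"
proof -
  let ?f = "\<lambda>i. last (P ! i)" and ?I = "{..<length P}"
  have last_in: "?f i \<in> set (P ! i) \<and> ?f i \<in> C" if "i < length P" for i
    using P(2) nth_mem[OF that] by simp
  have "inj_on ?f ?I"
  proof (rule inj_onI)
    fix i j assume i: "i \<in> ?I" "j \<in> ?I" and eq: "?f i = ?f j"
    show "i = j"
    proof (rule ccontr)
      assume "i \<noteq> j"
      then have "set (P ! i) \<inter> set (P ! j) = {}" using P(1) i by (simp add: edge_disjoint_def)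
      then show False using last_in[of i] last_in[of j] eq i by auto
    qed
  qed
  moreover have "?f ` ?I \<subseteq> C" using last_in by auto
  ultimately have onto: "?f ` ?I = C" using card_subset_eq[OF C(1)] card_image C(2) by (metis card_lessThan)
  define idx where "idx c = inv_into ?I ?f c" for c
  have idx: "idx c < length P \<and> last (P ! idx c) = c" if "c \<in> C" for c
    using that onto inv_into_into[of c ?f ?I] f_inv_into_f[of c ?f ?I] by (auto simp: idx_def)
  moreover have "set (P ! idx c) \<inter> set (P ! idx c') = {}" if "c \<in> C" "c' \<in> C" "c \<noteq> c'" for c c'
  proof -
    have "idx c \<noteq> idx c'" using idx that by metis
    then show ?thesis using P(1) idx that(1,2) by (simp add: edge_disjoint_def)
  qed
  ultimately show thesis by (rule that)
qed

lemma fan_to_cut_from_contraction: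
  assumes fin: "finite E" and two: "\<forall>e\<in>E. \<exists>p q. ends e = {p, q}" and X: "a \<in> X" "b \<notin> X"
    and "has_disjoint_paths E (contract_outside X b ends) a b (card (cut_edges E ends X))"
  obtains us es where "fan_to_cut E ends X a us es"
proof -
  let ?C = "cut_edges E ends X"
  let ?split = "\<lambda>p us. p \<noteq> [] \<and> path_verts E ends us (butlast p) \<and> hd us = a \<and> set us \<subseteq> X \<and>
    last p \<in> ?C \<and> last us \<in> ends (last p)"
  obtain P where P: "length P = card ?C" "\<forall>p\<in>set P. is_path E (contract_outside X b ends) a b p"
    "edge_disjoint P"
    using assms(5) unfolding has_disjoint_paths_def by blast
  have "\<forall>p\<in>set P. \<exists>us. ?split p us"
  proof
    fix p assume "p \<in> set P"
    then have "is_path E (contract_outside X b ends) a b p" using P(2) by blast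
    then show "\<exists>us. ?split p us" by (rule is_path_contract_outside_split[OF _ two X]) blast
  qed
  from bchoice[OF this] obtain U where U: "\<forall>p\<in>set P. ?split p (U p)" by blast
  obtain idx where idx: "\<And>c. c \<in> ?C \<Longrightarrow> idx c < length P \<and> last (P ! idx c) = c"
    "\<And>c c'. c \<in> ?C \<Longrightarrow> c' \<in> ?C \<Longrightarrow> c \<noteq> c' \<Longrightarrow> set (P ! idx c) \<inter> set (P ! idx c') = {}"
    using edge_disjoint_index_by_last[OF P(3) _ finite_cut[OF fin]] U P(1) by (metis (no_types, lifting))
  have "?split (P ! idx c) (U (P ! idx c))" if "c \<in> ?C" for c
    using U idx(1)[OF that] nth_mem by blast
  moreover have "set (butlast (P ! idx c)) \<inter> set (butlast (P ! idx c')) = {}"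
    if "c \<in> ?C" "c' \<in> ?C" "c \<noteq> c'" for c c'
    using idx(2)[OF that] by (auto dest: in_set_butlastD)
  ultimately have "fan_to_cut E ends X a (\<lambda>c. U (P ! idx c)) (\<lambda>c. butlast (P ! idx c))"
    using idx by (simp add: fan_to_cut_def)
  then show thesis by (rule that)
qed

lemma doubleton_eq_if_mem: "F = {p, q} \<Longrightarrow> x \<in> F \<Longrightarrow> y \<in> F \<Longrightarrow> x \<noteq> y \<Longrightarrow> F = {x, y}"
  by auto

lemma is_path_through_cut_edge:
  assumes two: "\<forall>e\<in>E. \<exists>p q. ends e = {p, q}" and c: "c \<in> cut_edges E ends X"
    and fan1: "fan_to_cut E ends X a us1 es1" and fan2: "fan_to_cut E ends (- X) b us2 es2"
  shows "is_path E ends a b (es1 c @ c # rev (es2 c))"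
proof -
  have c': "c \<in> cut_edges E ends (- X)" using c by (simp add: cut_edges_Compl)
  have p1: "path_verts E ends (us1 c) (es1 c)" "hd (us1 c) = a" "set (us1 c) \<subseteq> X" "last (us1 c) \<in> ends c"
    using fan1 c by (simp_all add: fan_to_cut_def)
  have p2: "path_verts E ends (us2 c) (es2 c)" "hd (us2 c) = b" "set (us2 c) \<subseteq> - X" "last (us2 c) \<in> ends c"
    using fan2 c' by (simp_all add: fan_to_cut_def)
  have ne: "us1 c \<noteq> []" "us2 c \<noteq> []" using path_verts_not_Nil p1(1) p2(1) by blast+
  have "last (us1 c) \<in> X" "last (us2 c) \<notin> X"
    using p1(3) p2(3) last_in_set[OF ne(1)] last_in_set[OF ne(2)] by auto
  moreover have "c \<in> E" using c by (simp add: cut_edges_def)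
  moreover obtain p q where "ends c = {p, q}" using two calculation(3) by blast
  ultimately have "ends c = {last (us1 c), hd (rev (us2 c))}"
    using doubleton_eq_if_mem p1(4) p2(4) ne(2) by (metis hd_rev)
  moreover have "set (us1 c) \<inter> set (rev (us2 c)) = {}" using p1(3) p2(3) by auto
  ultimately have "path_verts E ends (us1 c @ rev (us2 c)) (es1 c @ c # rev (es2 c))"
    using path_verts_append[OF p1(1) path_verts_rev[OF p2(1)] \<open>c \<in> E\<close>] by blast
  moreover have "hd (us1 c @ rev (us2 c)) = a" "last (us1 c @ rev (us2 c)) = b"
    using p1(2) p2(2) ne by (simp_all add: last_rev)
  ultimately show ?thesis unfolding is_path_iff_path_verts by blast
qed

lemma fan_paths_disjoint:
  assumes two: "\<forall>e\<in>E. \<exists>p q. ends e = {p, q}"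
    and fan1: "fan_to_cut E ends X a us1 es1" and fan2: "fan_to_cut E ends (- X) b us2 es2"
    and c: "c \<in> cut_edges E ends X" "c' \<in> cut_edges E ends X" "c \<noteq> c'"
  shows "set (es1 c @ c # rev (es2 c)) \<inter> set (es1 c' @ c' # rev (es2 c')) = {}"
proof (rule ccontr)
  let ?C = "cut_edges E ends X"
  have in1: "ends g \<subseteq> X" if "d \<in> ?C" "g \<in> set (es1 d)" for d g
    using fan_to_cut_inside[OF fan1 that] .
  have in2: "ends g \<subseteq> - X" if "d \<in> ?C" "g \<in> set (es2 d)" for d g
    using fan_to_cut_inside[OF fan2 _ that(2)] that(1) by (simp add: cut_edges_Compl)
  have in_E: "g \<in> E" if "d \<in> ?C" "g \<in> set (es1 d) \<or> g \<in> set (es2 d)" for d g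
    using that fan1 fan2 path_verts_edges by (fastforce simp: fan_to_cut_def cut_edges_Compl)
  assume "set (es1 c @ c # rev (es2 c)) \<inter> set (es1 c' @ c' # rev (es2 c')) \<noteq> {}"
  then obtain g where g: "g \<in> set (es1 c @ c # rev (es2 c))" "g \<in> set (es1 c' @ c' # rev (es2 c'))"
    by blast
  then consider "g \<in> set (es1 c)" "g \<in> set (es1 c')" | "g \<in> set (es2 c)" "g \<in> set (es2 c')"
    | "g \<in> set (es1 c) \<or> g \<in> set (es1 c')" "g \<in> set (es2 c) \<or> g \<in> set (es2 c')"
    | "g = c \<or> g = c'" by auto
  then show False
  proof cases
    case 1
    have "set (es1 c) \<inter> set (es1 c') = {}" using fan1 c by (simp add: fan_to_cut_def)
    with 1 show False by blast
  next
    case 2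
    have "set (es2 c) \<inter> set (es2 c') = {}" using fan2 c by (simp add: fan_to_cut_def cut_edges_Compl)
    with 2 show False by blast
  next
    case 3
    then have "ends g \<subseteq> X" "ends g \<subseteq> - X" "g \<in> E" using in1 in2 in_E c by blast+
    then show False using two by fastforce
  next
    case 4
    then have "\<not> ends g \<subseteq> X" "\<not> ends g \<subseteq> - X" using c by (auto simp: cut_edges_def crosses_def)
    then have "g \<notin> set (es1 d) \<and> g \<notin> set (es2 d)" if "d \<in> ?C" for d
      using in1[OF that] in2[OF that] by blast
    then have "g = c" "g = c'" using g c(1,2) by auto
    then show False using c(3) by simp
  qed
qed

lemma has_disjoint_paths_join_fans:
  assumes fin: "finite E" and two: "\<forall>e\<in>E. \<exists>p q. ends e = {p, q}"
    and fan1: "fan_to_cut E ends X a us1 es1" and fan2: "fan_to_cut E ends (- X) b us2 es2"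
  shows "has_disjoint_paths E ends a b (card (cut_edges E ends X))"
proof -
  let ?C = "cut_edges E ends X"
  let ?path = "\<lambda>c. es1 c @ c # rev (es2 c)"
  obtain cs where cs: "set cs = ?C" "distinct cs" using finite_distinct_list[OF finite_cut[OF fin]] by blast
  have "edge_disjoint (map ?path cs)"
    unfolding edge_disjoint_def
  proof (intro allI impI)
    fix i j assume ij: "i < length (map ?path cs)" "j < length (map ?path cs)" "i \<noteq> j"
    then have "cs ! i \<in> ?C" "cs ! j \<in> ?C" "cs ! i \<noteq> cs ! j"
      using cs nth_mem nth_eq_iff_index_eq[OF cs(2)] by auto
    then show "set (map ?path cs ! i) \<inter> set (map ?path cs ! j) = {}"
      using fan_paths_disjoint[OF two fan1 fan2] ij(1,2) by (simp only: length_map nth_map)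
  qed
  moreover have "\<forall>p\<in>set (map ?path cs). is_path E ends a b p"
    using cs(1) is_path_through_cut_edge[OF two _ fan1 fan2] by auto
  ultimately show ?thesis
    using distinct_card[OF cs(2)] cs(1) unfolding has_disjoint_paths_def
    by (intro exI[of _ "map ?path cs"]) simp
qed

(* The k paths of the first contraction end in distinct edges of the tight cut of X, those of the
   second start in them; gluing them at the cut edges yields k paths in the original graph. *)
lemma has_disjoint_paths_from_contractions:
  assumes fin: "finite E" and two: "\<forall>e\<in>E. \<exists>p q. ends e = {p, q}" and X: "a \<in> X" "b \<notin> X"
    and k: "card (cut_edges E ends X) = k"
    and "has_disjoint_paths E (contract_outside X b ends) a b k"
    and "has_disjoint_paths E (contract_outside (- X) a ends) a b k"
  shows "has_disjoint_paths E ends a b k"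
proof -
  obtain us1 es1 where fan1: "fan_to_cut E ends X a us1 es1"
    using fan_to_cut_from_contraction[OF fin two X] assms(6) k by metis
  have "has_disjoint_paths E (contract_outside (- X) a ends) b a (card (cut_edges E ends (- X)))"
    using has_disjoint_paths_swap[OF assms(7)] k by (simp add: cut_edges_Compl)
  moreover have "b \<in> - X" "a \<notin> - X" using X by simp_all
  ultimately obtain us2 es2 where fan2: "fan_to_cut E ends (- X) b us2 es2"
    using fan_to_cut_from_contraction[OF fin two] by metis
  show ?thesis using has_disjoint_paths_join_fans[OF fin two fan1 fan2] k by simp
qed

lemma menger_inner_edge_step:
  fixes E :: "'e set" and ends :: "'e \<Rightarrow> 'v set"
  assumes fin: "finite E" and two: "\<forall>e\<in>E. \<exists>p q. ends e = {p, q}" and ab: "a \<noteq> b"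
    and cuts: "separating_cuts_ge E ends a b k" "0 < k" and e: "e \<in> E" "ends e \<inter> {a, b} = {}"
    and IH: "\<And>(E' :: 'e set) ends' k'. graph_size E' ends' < graph_size E ends \<Longrightarrow> finite E' \<Longrightarrow>
      \<forall>e\<in>E'. \<exists>p q. ends' e = {p, q} \<Longrightarrow> separating_cuts_ge E' ends' a b k' \<Longrightarrow> has_disjoint_paths E' ends' a b k'"
  shows "has_disjoint_paths E ends a b k"
proof -
  have fin_ends: "\<forall>e\<in>E. finite (ends e)" using two by auto
  show ?thesis
  proof (cases "separating_cuts_ge (E - {e}) ends a b k")
    case True
    then have "has_disjoint_paths (E - {e}) ends a b k"
      using IH[OF graph_size_Diff_less[OF fin fin_ends e(1)]] fin two by simp
    then show ?thesis by (rule has_disjoint_paths_mono) auto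
  next
    case False
    obtain X where X: "a \<in> X" "b \<notin> X" "card (cut_edges E ends X) = k" "e \<in> cut_edges E ends X"
      by (rule critical_edge_in_tight_cut[OF fin cuts(1) False])
    have finU: "finite (\<Union>(ends ` E))" using fin fin_ends by simp
    obtain k' where "k = Suc k'" using cuts(2) not0_implies_Suc by blast
    note sides = two_vertices_on_each_side[OF finU cuts(1)[unfolded this] ab X(4) e(2) X(1,2)]
    show ?thesis
    proof (rule has_disjoint_paths_from_contractions[OF fin two X(1-3)])
      show "has_disjoint_paths E (contract_outside X b ends) a b k"
        by (rule IH[OF graph_size_contract_outside_less[OF finU sides(2)] fin
              two_ended_contract_outside[OF two] separating_cuts_ge_contract_outside(1)[OF cuts(1) X(1,2)]])
      show "has_disjoint_paths E (contract_outside (- X) a ends) a b k"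
        by (rule IH[OF graph_size_contract_outside_less[OF finU] fin
              two_ended_contract_outside[OF two] separating_cuts_ge_contract_outside(2)[OF cuts(1) X(1,2)]])
          (use sides(1) in simp)
    qed
  qed
qed

theorem menger_edge:
  fixes E :: "'e set" and ends :: "'e \<Rightarrow> 'v set"
  assumes "finite E" "\<forall>e\<in>E. \<exists>p q. ends e = {p, q}" "a \<noteq> b" "separating_cuts_ge E ends a b k"
  shows "has_disjoint_paths E ends a b k"
  using assms
proof (induction "graph_size E ends" arbitrary: E ends k rule: less_induct)
  case less
  note fin = less.prems(1) and two = less.prems(2) and ab = less.prems(3) and cuts = less.prems(4)
  have IH: "has_disjoint_paths E' ends' a b k'"
    if "graph_size E' ends' < graph_size E ends" "finite E'" "\<forall>e\<in>E'. \<exists>p q. ends' e = {p, q}"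
      "separating_cuts_ge E' ends' a b k'" for E' :: "'e set" and ends' k'
    using less.hyps[OF that(1)] that(2-4) ab by simp
  have fin_ends: "\<forall>e\<in>E. finite (ends e)" using two by auto
  have IH_Diff: "separating_cuts_ge (E - F) ends a b k' \<Longrightarrow> has_disjoint_paths (E - F) ends a b k'"
    if "e \<in> E" "e \<in> F" for e F k'
    using IH[OF graph_size_Diff_less[OF fin fin_ends that(1,2)]] fin two by simp
  show ?case
  proof (cases k)
    case 0
    then show ?thesis by (simp add: has_disjoint_paths_0)
  next
    case (Suc k')
    note cuts' = cuts[unfolded Suc]
    from two ab cuts' show ?thesis
    proof (cases rule: separating_cuts_ge_cases)
      case (direct e)
      have "is_path E ends a b [e]" unfolding is_path_def using direct ab by (intro exI[of _ "[a, b]"]) simp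
      from has_disjoint_paths_Suc_via_path[OF fin cuts' this _ IH_Diff[of e]] show ?thesis
        using direct(1) Suc by auto
    next
      case (via e1 e2 v)
      have "is_path E ends a b [e1, e2]"
        unfolding is_path_def using via ab by (intro exI[of _ "[a, v, b]"]) (simp add: All_less_Suc2)
      moreover have "\<exists>f. cut_edges E ends Z \<inter> {e1, e2} \<subseteq> {f}" if "a \<in> Z" "b \<notin> Z" for Z
      proof -
        have "e1 \<notin> cut_edges E ends Z \<or> e2 \<notin> cut_edges E ends Z" using via that by (auto simp: cut_edges_def)
        then show ?thesis by auto
      qed
      ultimately show ?thesis
        using has_disjoint_paths_Suc_via_path[OF fin cuts', of "[e1, e2]"] IH_Diff[of e1 "{e1, e2}" k'] via(1) Suc
        by simp
    next
      case (inner e)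
      show ?thesis by (rule menger_inner_edge_step[OF fin two ab cuts _ inner IH]) (simp_all add: Suc)
    qed
  qed
qed

corollary edge_conn_ge_if_separating_cuts_ge:
  assumes "finite E" "\<forall>e\<in>E. \<exists>p q. ends e = {p, q}" "a \<noteq> b" "separating_cuts_ge E ends a b k"
  shows "k \<le> edge_conn E ends a b"
  using edge_conn_geI[OF assms(1,3) menger_edge[OF assms]] .

corollary small_cut_if_edge_conn_less:
  assumes "finite E" "\<forall>e\<in>E. \<exists>p q. ends e = {p, q}" "a \<noteq> b" "edge_conn E ends a b < k"
  obtains Z where "a \<in> Z" "b \<notin> Z" "card (cut_edges E ends Z) < k"
proof -
  have "\<not> separating_cuts_ge E ends a b k"
    using edge_conn_ge_if_separating_cuts_ge[OF assms(1-3), of k] assms(4) by linarith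
  then show thesis using that by (auto simp: separating_cuts_ge_def not_le)
qed

section \<open>Dangerous sets\<close>

locale lifting_at_vertex =
  fixes V :: "'v set" and E :: "'e set" and ends :: "'e \<Rightarrow> 'v set"
    and s :: 'v and A :: "'v set" and l :: nat
  assumes multigraph: "multigraph V E ends"
    and l_ge_4: "4 \<le> l"
    and A_subset: "A \<subseteq> V" and s_notin_A: "s \<notin> A"
    and conn: "\<forall>x\<in>A. \<forall>y\<in>A. x \<noteq> y \<longrightarrow> edge_conn E ends x y \<ge> l"
    and edges_meet_A: "\<forall>e\<in>E. ends e \<inter> A \<noteq> {}"
begin

definition Es :: "'e set" where
  "Es = {e\<in>E. s \<in> ends e}"

abbreviation nb :: "'e \<Rightarrow> 'v" where
  "nb \<equiv> other_end ends s"

abbreviation d :: "'v set \<Rightarrow> nat" where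
  "d Z \<equiv> card (cut_edges E ends Z)"

abbreviation adm :: "'e \<Rightarrow> 'e \<Rightarrow> bool" where
  "adm \<equiv> lift_adm V E ends s A l"

definition separates :: "'v set \<Rightarrow> bool" where
  "separates Z \<longleftrightarrow> Z \<inter> A \<noteq> {} \<and> \<not> A \<subseteq> Z"

definition dangerous :: "'v set \<Rightarrow> bool" where
  "dangerous Z \<longleftrightarrow> Z \<subseteq> V - {s} \<and> separates Z \<and> d Z \<le> l + 1"

definition edges_into :: "'v set \<Rightarrow> 'e set" where
  "edges_into Z = {e\<in>Es. nb e \<in> Z}"

lemma finite_E: "finite E"
  using multigraph by (simp add: multigraph_def)

lemma ends_subset_V: "e \<in> E \<Longrightarrow> ends e \<subseteq> V"
  using multigraph by (simp add: multigraph_def)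

lemma two_ended: "\<forall>e\<in>E. \<exists>p q. ends e = {p, q}"
  using multigraph unfolding multigraph_def card_2_iff by blast

lemma finite_Es: "finite Es"
  using finite_E by (simp add: Es_def)

lemma A_subset_V_minus_s: "A \<subseteq> V - {s}"
  using A_subset s_notin_A by auto

lemma Es_ends:
  assumes "e \<in> Es"
  shows "e \<in> E" "ends e = {s, nb e}" "nb e \<noteq> s" "nb e \<in> A"
proof -
  show "e \<in> E" using assms by (simp add: Es_def)
  then obtain x y where xy: "ends e = {x, y}" "x \<noteq> y"
    using multigraph by (auto simp: multigraph_def card_2_iff)
  moreover have "s \<in> ends e" using assms by (simp add: Es_def)
  ultimately obtain z where z: "ends e = {s, z}" "z \<noteq> s" by auto
  then have "ends e - {s} = {z}" by auto
  then have "nb e = z" by (simp add: other_end_def)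
  then show "ends e = {s, nb e}" "nb e \<noteq> s" using z by simp_all
  then show "nb e \<in> A" using edges_meet_A \<open>e \<in> E\<close> s_notin_A by auto
qed

lemma d_ge_if_separates: "separates Z \<Longrightarrow> l \<le> d Z"
proof -
  assume "separates Z"
  then obtain x y where "x \<in> Z" "x \<in> A" "y \<in> A" "y \<notin> Z" by (auto simp: separates_def)
  then have "l \<le> edge_conn E ends x y" using conn by auto
  also have "\<dots> \<le> d Z" using edge_conn_le_card_cut[OF finite_E \<open>x \<in> Z\<close> \<open>y \<notin> Z\<close>] .
  finally show ?thesis .
qed

lemma separates_complement: "separates Z \<Longrightarrow> separates (V - {s} - Z)"
  using A_subset_V_minus_s by (auto simp: separates_def)

lemma d_complement:
  assumes W: "W \<subseteq> V - {s}"
  shows "d (V - {s} - W) + 2 * card (edges_into W) = d W + card Es"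
proof -
  have "V - {s} - W = V - insert s W" by auto
  then have "d (V - {s} - W) = d (insert s W)"
    using cut_complement[of E ends V "insert s W"] ends_subset_V by simp
  moreover have "(\<Sum>e\<in>E. of_bool (crosses (ends e) (insert s W)) + 2 * of_bool (e \<in> Es \<and> nb e \<in> W)) =
      (\<Sum>e\<in>E. of_bool (crosses (ends e) W) + (of_bool (e \<in> Es) :: nat))"
  proof (rule sum.cong)
    fix e assume "e \<in> E"
    show "of_bool (crosses (ends e) (insert s W)) + 2 * of_bool (e \<in> Es \<and> nb e \<in> W) =
        of_bool (crosses (ends e) W) + (of_bool (e \<in> Es) :: nat)"
    proof (cases "e \<in> Es")
      case True
      then show ?thesis using Es_ends(2,3)[OF True] W by (cases "nb e \<in> W") auto
    next
      case False
      then have "s \<notin> ends e" using \<open>e \<in> E\<close> by (simp add: Es_def)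
      then have "crosses (ends e) (insert s W) \<longleftrightarrow> crosses (ends e) W"
        by (auto simp: crosses_def subset_insert)
      then show ?thesis using False by simp
    qed
  qed simp
  moreover have "card (edges_into W) = (\<Sum>e\<in>E. of_bool (e \<in> Es \<and> nb e \<in> W))"
    using card_filter_eq_sum[OF finite_E, of "\<lambda>e. e \<in> Es \<and> nb e \<in> W"] by (simp add: edges_into_def Es_def)
  moreover have "card Es = (\<Sum>e\<in>E. of_bool (e \<in> Es))"
    using card_filter_eq_sum[OF finite_E, of "\<lambda>e. e \<in> Es"] by (simp add: Es_def)
  ultimately show ?thesis
    by (simp only: card_cut_eq_sum[OF finite_E] sum.distrib sum_distrib_left[symmetric])
qed

lemma lift_edges_eq: "lift_edges E ends s e f = (E - {f}, ends(e := {nb e, nb f}))"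
  by (simp add: lift_edges_def)

lemma card_cut_lift:
  assumes e: "e \<in> Es" and f: "f \<in> Es" and "e \<noteq> f" and "s \<notin> Z"
  shows "card (cut_edges (E - {f}) (ends(e := {nb e, nb f})) Z) + 2 * of_bool (nb e \<in> Z \<and> nb f \<in> Z) = d Z"
proof -
  let ?ends' = "ends(e := {nb e, nb f})"
  have E: "e \<in> E - {f}" "f \<in> E" using Es_ends(1)[OF e] Es_ends(1)[OF f] \<open>e \<noteq> f\<close> by auto
  have crosses_e: "crosses (ends e) Z \<longleftrightarrow> nb e \<in> Z" and crosses_f: "crosses (ends f) Z \<longleftrightarrow> nb f \<in> Z"
    using Es_ends(2)[OF e] Es_ends(2)[OF f] \<open>s \<notin> Z\<close> by simp_all
  let ?c = "\<lambda>F. of_bool (crosses F Z) :: nat"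
  let ?rest = "\<Sum>g\<in>E - {f} - {e}. ?c (ends g)"
  have fin: "finite (E - {f})" using finite_E by simp
  have "d Z = (\<Sum>g\<in>E. ?c (ends g))" by (rule card_cut_eq_sum[OF finite_E])
  also have "\<dots> = ?c (ends f) + (\<Sum>g\<in>E - {f}. ?c (ends g))" by (rule sum.remove[OF finite_E E(2)])
  also have "(\<Sum>g\<in>E - {f}. ?c (ends g)) = ?c (ends e) + ?rest" by (rule sum.remove[OF fin E(1)])
  finally have dZ: "d Z = ?c (ends f) + ?c (ends e) + ?rest" by simp
  have "card (cut_edges (E - {f}) ?ends' Z) = (\<Sum>g\<in>E - {f}. ?c (?ends' g))"
    by (rule card_cut_eq_sum[OF fin])
  also have "\<dots> = ?c (?ends' e) + (\<Sum>g\<in>E - {f} - {e}. ?c (?ends' g))" by (rule sum.remove[OF fin E(1)])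
  also have "(\<Sum>g\<in>E - {f} - {e}. ?c (?ends' g)) = ?rest" by (rule sum.cong) auto
  finally have "card (cut_edges (E - {f}) ?ends' Z) = ?c {nb e, nb f} + ?rest" by (simp only: fun_upd_same)
  then show ?thesis using dZ crosses_e crosses_f by (cases "nb e \<in> Z"; cases "nb f \<in> Z") simp_all
qed

lemma lift_adm_iff:
  assumes "e \<in> Es" "f \<in> Es" "e \<noteq> f"
  shows "adm e f \<longleftrightarrow> (\<forall>x\<in>A. \<forall>y\<in>A. x \<noteq> y \<longrightarrow> l \<le> edge_conn (E - {f}) (ends(e := {nb e, nb f})) x y)"
  using assms A_subset_V_minus_s by (auto simp: lift_adm_def lift_edges_eq tau_def Es_def)

lemma not_adm_if_dangerous:
  assumes Z: "dangerous Z" and e: "e \<in> Es" and f: "f \<in> Es" and "nb e \<in> Z" "nb f \<in> Z"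
  shows "\<not> adm e f"
proof
  assume adm: "adm e f"
  then have "e \<noteq> f" by (simp add: lift_adm_def)
  obtain x y where xy: "x \<in> Z" "x \<in> A" "y \<in> A" "y \<notin> Z"
    using Z by (auto simp: dangerous_def separates_def)
  have "s \<notin> Z" using Z by (auto simp: dangerous_def)
  have "l \<le> edge_conn (E - {f}) (ends(e := {nb e, nb f})) x y"
    using adm xy \<open>e \<noteq> f\<close> lift_adm_iff[OF e f] by auto
  also have "\<dots> \<le> card (cut_edges (E - {f}) (ends(e := {nb e, nb f})) Z)"
    using finite_E xy(1,4) by (simp add: edge_conn_le_card_cut)
  finally show False
    using card_cut_lift[OF e f \<open>e \<noteq> f\<close> \<open>s \<notin> Z\<close>] Z assms(4,5) by (simp add: dangerous_def)
qed

lemma dangerous_if_not_adm: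
  assumes e: "e \<in> Es" and f: "f \<in> Es" and "e \<noteq> f" and "\<not> adm e f"
  shows "\<exists>Z. dangerous Z \<and> nb e \<in> Z \<and> nb f \<in> Z"
proof -
  let ?E' = "E - {f}" and ?ends' = "ends(e := {nb e, nb f})"
  obtain x y where xy: "x \<in> A" "y \<in> A" "x \<noteq> y" "edge_conn ?E' ?ends' x y < l"
    using assms lift_adm_iff by (auto simp: not_le)
  have two': "\<forall>g\<in>?E'. \<exists>p q. ?ends' g = {p, q}" using two_ended by auto
  have V': "\<forall>g\<in>?E'. ?ends' g \<subseteq> V"
    using ends_subset_V Es_ends(4)[OF e] Es_ends(4)[OF f] A_subset by auto
  obtain Z where Z: "x \<in> Z" "y \<notin> Z" "card (cut_edges ?E' ?ends' Z) < l"
    using small_cut_if_edge_conn_less[OF _ two' xy(3,4)] finite_E by blast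
  define Z0 where "Z0 = (if s \<in> Z then V - Z else Z \<inter> V)"
  have Z0: "Z0 \<subseteq> V - {s}" by (auto simp: Z0_def)
  have cut_Z0: "cut_edges ?E' ?ends' Z0 = cut_edges ?E' ?ends' Z"
  proof (cases "s \<in> Z")
    case True
    then have "Z0 = V - Z" by (simp add: Z0_def)
    then show ?thesis by (simp only: cut_complement[OF V'])
  next
    case False
    then have "Z0 = Z \<inter> V" by (simp add: Z0_def)
    then show ?thesis by (simp only: cut_Int_vertices[OF V'])
  qed
  have "separates Z0"
    using Z(1,2) xy(1,2) A_subset by (auto simp: Z0_def separates_def)
  then have "l \<le> d Z0" by (rule d_ge_if_separates)
  moreover have "s \<notin> Z0" using Z0 by auto
  then have lift: "card (cut_edges ?E' ?ends' Z) + 2 * of_bool (nb e \<in> Z0 \<and> nb f \<in> Z0) = d Z0"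
    using card_cut_lift[OF e f \<open>e \<noteq> f\<close>] cut_Z0 by metis
  ultimately have "nb e \<in> Z0 \<and> nb f \<in> Z0" using Z(3) by (cases "nb e \<in> Z0 \<and> nb f \<in> Z0") simp_all
  moreover have "d Z0 \<le> l + 1" using lift calculation Z(3) by simp
  ultimately show ?thesis using Z0 \<open>separates Z0\<close> by (auto simp: dangerous_def)
qed

lemma separates_uncross:
  assumes "separates X" "separates Y" "x \<in> X \<inter> Y \<inter> A"
  shows "A \<subseteq> X \<union> Y \<Longrightarrow> separates (X - Y) \<and> separates (Y - X)"
    and "\<not> A \<subseteq> X \<union> Y \<Longrightarrow> separates (X \<inter> Y) \<and> separates (X \<union> Y)"
  using assms by (auto simp: separates_def)

lemma diagonal_edge_at_s:
  assumes "g \<in> Es" "nb g \<in> X \<inter> Y" "s \<notin> X \<union> Y"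
  shows "1 \<le> card (diagonal_edges E ends X Y)"
proof -
  have "g \<in> diagonal_edges E ends X Y"
    using diagonal_edgesI[OF Es_ends(1)[OF assms(1)] _ assms(2,3)] Es_ends(2)[OF assms(1)]
    by (simp add: insert_commute)
  then show ?thesis using finite_E card_0_eq[of "diagonal_edges E ends X Y"]
    by (fastforce simp: diagonal_edges_def finite_cut)
qed

lemma separates_union_d_le:
  assumes "X \<subseteq> V - {s}" "Y \<subseteq> V - {s}" "separates X" "separates Y"
    and g: "g \<in> Es" "nb g \<in> X" "nb g \<in> Y" and le: "d X + d Y \<le> 2 * l + 1"
  shows "separates (X \<union> Y) \<and> d (X \<union> Y) + l \<le> d X + d Y"
proof (cases "A \<subseteq> X \<union> Y")
  case True
  \<comment> \<open>impossible: posimodularity and the diagonal edge g would give d X + d Y \<ge> 2l + 2\<close>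
  then have "separates (X - Y)" "separates (Y - X)"
    using separates_uncross(1)[OF assms(3,4)] g Es_ends(4)[OF g(1)] by blast+
  then have "l \<le> d (X - Y)" "l \<le> d (Y - X)" by (simp_all add: d_ge_if_separates)
  moreover have "1 \<le> card (diagonal_edges E ends X Y)"
    using diagonal_edge_at_s[OF g(1)] g(2,3) assms(1,2) by auto
  ultimately show ?thesis using card_cut_posimodular[OF finite_E two_ended, of X Y] le by linarith
next
  case False
  then have "separates (X \<inter> Y)" "separates (X \<union> Y)"
    using separates_uncross(2)[OF assms(3,4)] g Es_ends(4)[OF g(1)] by blast+
  then show ?thesis
    using d_ge_if_separates[of "X \<inter> Y"] card_cut_submodular[OF finite_E two_ended, of X Y] by linarith
qed

lemma dangerous_crossing:
  assumes X: "dangerous X" and Y: "dangerous Y" and g: "g \<in> Es" "nb g \<in> X" "nb g \<in> Y"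
    and u: "u \<in> A" "u \<in> X" "u \<notin> Y" and w: "w \<in> A" "w \<in> Y" "w \<notin> X"
  shows "separates (X - Y)" "separates (Y - X)" "d (X - Y) = l" "d (Y - X) = l"
    "card (diagonal_edges E ends X Y) = 1" "d X = l + 1" "d Y = l + 1"
proof -
  show sep: "separates (X - Y)" "separates (Y - X)"
    using u w g(2,3) Es_ends(4)[OF g(1)] by (auto simp: separates_def)
  have "l \<le> d (X - Y)" "l \<le> d (Y - X)" using sep by (simp_all add: d_ge_if_separates)
  moreover have "1 \<le> card (diagonal_edges E ends X Y)"
    using diagonal_edge_at_s[OF g(1)] g(2,3) X Y by (auto simp: dangerous_def)
  moreover have "d X \<le> l + 1" "d Y \<le> l + 1" using X Y by (simp_all add: dangerous_def)
  moreover note card_cut_posimodular[OF finite_E two_ended, of X Y]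
  ultimately show "d (X - Y) = l" "d (Y - X) = l" "card (diagonal_edges E ends X Y) = 1"
    "d X = l + 1" "d Y = l + 1" by linarith+
qed

lemma no_dangerous_triangle:
  assumes X: "dangerous X1" "dangerous X2" "dangerous X3" and g: "g1 \<in> Es" "g2 \<in> Es" "g3 \<in> Es"
    and g1: "nb g1 \<in> X2" "nb g1 \<in> X3" "nb g1 \<notin> X1"
    and g2: "nb g2 \<in> X1" "nb g2 \<in> X3" "nb g2 \<notin> X2"
    and g3: "nb g3 \<in> X1" "nb g3 \<in> X2" "nb g3 \<notin> X3"
    and deg: "4 \<le> card Es"
  shows False
proof -
  have A: "nb g1 \<in> A" "nb g2 \<in> A" "nb g3 \<in> A" using Es_ends(4) g by auto
  have V: "X1 \<subseteq> V - {s}" "X2 \<subseteq> V - {s}" "X3 \<subseteq> V - {s}" using X by (auto simp: dangerous_def)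
  note P12 = dangerous_crossing[OF X(1,2) g(3) g3(1,2) A(2) g2(1,3) A(1) g1(1,3)]
  note P13 = dangerous_crossing[OF X(1,3) g(2) g2(1,2) A(3) g3(1,3) A(1) g1(2,3)]
  note P23 = dangerous_crossing[OF X(2,3) g(1) g1(1,2) A(3) g3(2,3) A(2) g2(2,3)]
  have "d ((X2 - X1) \<union> (X3 - X1)) \<le> l"
    using separates_union_d_le[of "X2 - X1" "X3 - X1" g1] V P12 P13 g(1) g1 by auto
  moreover have "d ((X1 - X2) \<union> (X3 - X2)) \<le> l"
    using separates_union_d_le[of "X1 - X2" "X3 - X2" g2] V P12 P23 g(2) g2 by auto
  moreover have "d ((X1 - X3) \<union> (X2 - X3)) \<le> l"
    using separates_union_d_le[of "X1 - X3" "X2 - X3" g3] V P13 P23 g(3) g3 by auto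
  moreover note card_cut_three_sets[OF finite_E two_ended, of X1 X2 X3]
  \<comment> \<open>a cut of size at most 3 can neither separate A (l \<ge> 4) nor contain all edges at s\<close>
  ultimately have small: "d (X1 \<union> X2 \<union> X3) \<le> 3" using P12 P13 P23 by simp
  show False
  proof (cases "separates (X1 \<union> X2 \<union> X3)")
    case True
    then show False using d_ge_if_separates small l_ge_4 by fastforce
  next
    case False
    then have A_sub: "A \<subseteq> X1 \<union> X2 \<union> X3" using A g1 by (auto simp: separates_def)
    have "Es \<subseteq> cut_edges E ends (X1 \<union> X2 \<union> X3)"
    proof
      fix e assume "e \<in> Es"
      then show "e \<in> cut_edges E ends (X1 \<union> X2 \<union> X3)"
        using Es_ends[OF \<open>e \<in> Es\<close>] A_sub V by (auto simp: cut_edges_def)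
    qed
    then have "card Es \<le> d (X1 \<union> X2 \<union> X3)" by (simp add: card_mono finite_cut finite_E)
    then show False using small deg by simp
  qed
qed

lemma dangerous_cover:
  assumes "R \<subseteq> Es" "2 \<le> card R" "\<forall>e\<in>R. \<forall>f\<in>R. \<not> adm e f" and deg: "4 \<le> card Es"
  shows "\<exists>Z. dangerous Z \<and> (\<forall>g\<in>R. nb g \<in> Z)"
  using assms(1-3)
proof (induction "card R" arbitrary: R rule: less_induct)
  case less
  have finR: "finite R" using finite_subset[OF less.prems(1) finite_Es] .
  show ?case
  proof (cases "card R = 2")
    case True
    then obtain e f where ef: "R = {e, f}" "e \<noteq> f" by (auto simp: card_2_iff)
    then have "\<not> adm e f" using less.prems(3) by simp
    then obtain Z where "dangerous Z" "nb e \<in> Z" "nb f \<in> Z"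
      using dangerous_if_not_adm[of e f] ef less.prems(1) by auto
    then show ?thesis using ef by auto
  next
    case False
    then have "3 \<le> card R" using less.prems(2) by simp
    then obtain T where "T \<subseteq> R" "card T = 3" using obtain_subset_with_card_n by metis
    then obtain e1 e2 e3 where e: "e1 \<in> R" "e2 \<in> R" "e3 \<in> R" "e1 \<noteq> e2" "e1 \<noteq> e3" "e2 \<noteq> e3"
      by (auto simp: card_3_iff)
    have IH: "\<exists>Z. dangerous Z \<and> (\<forall>g\<in>R - {x}. nb g \<in> Z)" if "x \<in> R" for x
    proof (rule less.hyps)
      show "card (R - {x}) < card R" "2 \<le> card (R - {x})"
        using that finR \<open>3 \<le> card R\<close> by (simp_all add: card_Diff1_less)
    qed (use less.prems in auto)
    obtain Z1 where Z1: "dangerous Z1" "\<forall>g\<in>R - {e1}. nb g \<in> Z1" using IH[OF e(1)] by blast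
    obtain Z2 where Z2: "dangerous Z2" "\<forall>g\<in>R - {e2}. nb g \<in> Z2" using IH[OF e(2)] by blast
    obtain Z3 where Z3: "dangerous Z3" "\<forall>g\<in>R - {e3}. nb g \<in> Z3" using IH[OF e(3)] by blast
    show ?thesis
    proof (cases "nb e1 \<in> Z1 \<or> nb e2 \<in> Z2 \<or> nb e3 \<in> Z3")
      case True
      then show ?thesis using Z1 Z2 Z3 by (metis Diff_iff singletonD)
    next
      case False
      have "e1 \<in> Es" "e2 \<in> Es" "e3 \<in> Es" using e less.prems(1) by auto
      moreover have "nb e1 \<in> Z2" "nb e1 \<in> Z3" "nb e2 \<in> Z1" "nb e2 \<in> Z3" "nb e3 \<in> Z1" "nb e3 \<in> Z2"
        using Z1(2) Z2(2) Z3(2) e by auto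
      ultimately show ?thesis
        using no_dangerous_triangle[OF Z1(1) Z2(1) Z3(1), of e1 e2 e3] False deg by blast
    qed
  qed
qed

end

section \<open>The lifting graph\<close>

locale lifting_with_dangerous_majority = lifting_at_vertex V E ends s A l
  for V :: "'v set" and E :: "'e set" and ends s A l +
  fixes X :: "'v set"
  assumes X_dangerous: "dangerous X"
    and odd_degree: "odd (card Es)" and degree_ge_5: "5 \<le> card Es"
    and majority: "(card Es + 1) div 2 \<le> card (edges_into X)"
begin

abbreviation Xc :: "'v set" where
  "Xc \<equiv> V - {s} - X"

abbreviation P :: "'e set" where
  "P \<equiv> edges_into X"

abbreviation Q :: "'e set" where
  "Q \<equiv> edges_into Xc"

lemma X_subset: "X \<subseteq> V - {s}"
  using X_dangerous by (simp add: dangerous_def)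

lemma P_Q_partition: "P \<inter> Q = {}" "P \<union> Q = Es"
  using Es_ends(4) A_subset_V_minus_s by (auto simp: edges_into_def)

lemma finite_P: "finite P" and finite_Q: "finite Q"
  using finite_Es by (simp_all add: edges_into_def)

lemma card_P: "card P = (card Es + 1) div 2" and d_Xc: "d Xc = l"
proof -
  have "separates Xc" using X_dangerous separates_complement by (simp add: dangerous_def)
  then have "l \<le> d Xc" by (rule d_ge_if_separates)
  moreover have "d X \<le> l + 1" using X_dangerous by (simp add: dangerous_def)
  moreover note d_complement[OF X_subset] majority odd_degree
  ultimately show "card P = (card Es + 1) div 2" "d Xc = l" by (auto elim!: oddE)
qed

lemma card_Q: "card Q = (card Es - 1) div 2"
  using card_Un_disjoint[OF finite_P finite_Q P_Q_partition(1)] P_Q_partition(2) card_P odd_degree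
  by (auto elim!: oddE)

lemma Xc_dangerous: "dangerous Xc"
  using X_dangerous separates_complement d_Xc by (auto simp: dangerous_def)

lemma not_adm_within:
  shows "e \<in> P \<Longrightarrow> f \<in> P \<Longrightarrow> \<not> adm e f" and "e \<in> Q \<Longrightarrow> f \<in> Q \<Longrightarrow> \<not> adm e f"
  using not_adm_if_dangerous[OF X_dangerous] not_adm_if_dangerous[OF Xc_dangerous]
  by (auto simp: edges_into_def)

(* An edge into X that may fail to be admissible with edges into Xc; there is at most one,
   and it is the isolated vertex of the second alternative. *)
definition exceptional :: "'e \<Rightarrow> bool" where
  "exceptional g \<longleftrightarrow> (\<exists>h\<in>Q. \<exists>Z. dangerous Z \<and> nb g \<in> Z \<and> nb h \<in> Z)"

lemma adm_across:
  assumes "g \<in> P" "h \<in> Q" "\<not> exceptional g"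
  shows "adm g h" "adm h g"
proof -
  have "g \<noteq> h" "g \<in> Es" "h \<in> Es" using assms(1,2) P_Q_partition by auto
  then show "adm g h" "adm h g"
    using assms dangerous_if_not_adm[of g h] dangerous_if_not_adm[of h g] by (auto simp: exceptional_def)
qed

lemma exceptional_dangerous_superset:
  assumes "g \<in> P" "exceptional g"
  obtains W where "dangerous W" "Xc \<subseteq> W" "nb g \<in> W"
proof -
  obtain h Z where hZ: "h \<in> Q" "dangerous Z" "nb g \<in> Z" "nb h \<in> Z"
    using assms(2) by (auto simp: exceptional_def)
  have Z: "Z \<subseteq> V - {s}" "separates Z" "d Z \<le> l + 1" using hZ(2) by (simp_all add: dangerous_def)
  have "h \<in> Es" "nb h \<in> Xc" using hZ(1) by (simp_all add: edges_into_def)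
  then have "separates (Xc \<union> Z) \<and> d (Xc \<union> Z) + l \<le> d Xc + d Z"
    using separates_union_d_le[of Xc Z h] Xc_dangerous Z hZ(4) d_Xc by (auto simp: dangerous_def)
  then have "dangerous (Xc \<union> Z)" using Z(1,3) d_Xc by (auto simp: dangerous_def)
  then show thesis using that hZ(3) by blast
qed

lemma exceptional_not_adm:
  assumes "g \<in> P" "exceptional g" "h \<in> Q"
  shows "\<not> adm g h" "\<not> adm h g"
proof -
  obtain W where W: "dangerous W" "Xc \<subseteq> W" "nb g \<in> W"
    using exceptional_dangerous_superset[OF assms(1,2)] .
  have "nb h \<in> W" "h \<in> Es" "g \<in> Es" using assms(1,3) W(2) by (auto simp: edges_into_def)
  then show "\<not> adm g h" "\<not> adm h g" using not_adm_if_dangerous[OF W(1)] W(3) by auto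
qed

lemma exceptional_tight_set:
  assumes "g \<in> P" "exceptional g"
  obtains U where "U \<subseteq> V - {s}" "separates U" "d U = l" "U \<inter> Xc = {}" "\<forall>p\<in>P - {g}. nb p \<in> U"
proof -
  obtain W where W: "dangerous W" "Xc \<subseteq> W" "nb g \<in> W"
    using exceptional_dangerous_superset[OF assms] .
  have WV: "W \<subseteq> V - {s}" using W(1) by (simp add: dangerous_def)
  define U where "U = V - {s} - W"
  have sub: "insert g Q \<subseteq> edges_into W" using W(2,3) assms(1) by (auto simp: edges_into_def)
  have "g \<notin> Q" using P_Q_partition(1) assms(1) by blast
  then have "card (insert g Q) = (card Es + 1) div 2"
    using finite_Q card_Q odd_degree by (auto elim!: oddE)
  then have "(card Es + 1) div 2 \<le> card (edges_into W)"
    using card_mono[OF _ sub] finite_Es by (simp add: edges_into_def)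
  moreover have "separates U" using W(1) separates_complement by (simp add: U_def dangerous_def)
  then have "l \<le> d U" by (rule d_ge_if_separates)
  moreover have "d W \<le> l + 1" using W(1) by (simp add: dangerous_def)
  moreover note d_complement[OF WV] odd_degree
  ultimately have card_W: "card (edges_into W) = (card Es + 1) div 2" and "d U = l"
    by (auto simp: U_def elim!: oddE)
  have "insert g Q = edges_into W"
    using card_subset_eq[OF _ sub] finite_Es card_W \<open>card (insert g Q) = _\<close> by (simp add: edges_into_def)
  have "nb p \<in> U" if p: "p \<in> P - {g}" for p
  proof -
    have "p \<in> Es" "p \<notin> Q" using p P_Q_partition by (auto simp: edges_into_def)
    then have "nb p \<notin> W" using p \<open>insert g Q = edges_into W\<close> by (auto simp: edges_into_def)
    moreover have "nb p \<in> V - {s}" using Es_ends(4)[OF \<open>p \<in> Es\<close>] A_subset_V_minus_s by auto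
    ultimately show ?thesis by (simp add: U_def)
  qed
  then have "\<forall>p\<in>P - {g}. nb p \<in> U" by blast
  moreover have "U \<inter> Xc = {}" using W(2) by (auto simp: U_def)
  moreover have "U \<subseteq> V - {s}" by (simp add: U_def)
  ultimately show thesis using that \<open>separates U\<close> \<open>d U = l\<close> by blast
qed

lemma adm_iff_across:
  assumes "e \<in> Es" "f \<in> Es"
  shows "adm e f \<longleftrightarrow> e \<in> P \<and> \<not> exceptional e \<and> f \<in> Q \<or> e \<in> Q \<and> f \<in> P \<and> \<not> exceptional f"
proof -
  have disj: "g \<notin> P \<or> g \<notin> Q" for g using P_Q_partition(1) by blast
  have "e \<in> P \<or> e \<in> Q" "f \<in> P \<or> f \<in> Q" using assms P_Q_partition(2) by blast+
  then consider "e \<in> P" "f \<in> P" | "e \<in> Q" "f \<in> Q" | "e \<in> P" "f \<in> Q" | "e \<in> Q" "f \<in> P"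
    by blast
  then show ?thesis
  proof cases
    case 1
    then show ?thesis using not_adm_within(1) disj by blast
  next
    case 2
    then show ?thesis using not_adm_within(2) disj by blast
  next
    case 3
    then show ?thesis using adm_across(1) exceptional_not_adm(1) disj by (cases "exceptional e") auto
  next
    case 4
    then show ?thesis using adm_across(2) exceptional_not_adm(2) disj by (cases "exceptional f") auto
  qed
qed

lemma exceptional_unique:
  assumes "g \<in> P" "exceptional g" "g' \<in> P" "exceptional g'"
  shows "g = g'"
proof (rule ccontr)
  assume "g \<noteq> g'"
  obtain U where U: "U \<subseteq> V - {s}" "separates U" "d U = l" "U \<inter> Xc = {}" "\<forall>p\<in>P - {g}. nb p \<in> U"
    using exceptional_tight_set[OF assms(1,2)] .
  obtain U' where U': "U' \<subseteq> V - {s}" "separates U'" "d U' = l" "U' \<inter> Xc = {}" "\<forall>p\<in>P - {g'}. nb p \<in> U'"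
    using exceptional_tight_set[OF assms(3,4)] .
  have "card {g, g'} \<le> 2" by (simp add: card_insert_if)
  moreover have "3 \<le> card P" using card_P degree_ge_5 odd_degree by (auto elim!: oddE)
  ultimately have "1 \<le> card (P - {g, g'})"
    using card_Diff_subset[of "{g, g'}" P] assms(1,3) by simp
  then have "P - {g, g'} \<noteq> {}" by (metis card.empty not_one_le_zero)
  then obtain g0 where g0: "g0 \<in> P" "g0 \<noteq> g" "g0 \<noteq> g'" by blast
  have "g0 \<in> Es" "nb g0 \<in> U" "nb g0 \<in> U'" using U(5) U'(5) g0 by (auto simp: edges_into_def)
  then have union: "separates (U \<union> U') \<and> d (U \<union> U') + l \<le> d U + d U'"
    using separates_union_d_le[OF U(1) U'(1) U(2) U'(2)] U(3) U'(3) by simp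
  \<comment> \<open>the complement of U \<union> U' separates A, yet its cut is forced below l\<close>
  have "P \<subseteq> edges_into (U \<union> U')" using U(5) U'(5) \<open>g \<noteq> g'\<close> by (auto simp: edges_into_def)
  then have "(card Es + 1) div 2 \<le> card (edges_into (U \<union> U'))"
    using card_mono[of "edges_into (U \<union> U')" P] finite_Es card_P by (simp add: edges_into_def)
  moreover have "separates (V - {s} - (U \<union> U'))"
    using union separates_complement by simp
  then have "l \<le> d (V - {s} - (U \<union> U'))" by (rule d_ge_if_separates)
  moreover note d_complement[of "U \<union> U'"] U(1,3) U'(1,3) union odd_degree degree_ge_5
  ultimately show False by (auto elim!: oddE)
qed

end

context lifting_at_vertex
begin


theorem lifting_graph_structure:
  assumes I: "I \<subseteq> Es" "card I = (card Es + 1) div 2" "\<forall>e\<in>I. \<forall>f\<in>I. \<not> adm e f"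
    and odd: "odd (card Es)" and deg: "5 \<le> card Es"
  shows "(\<exists>X Y. X \<inter> Y = {} \<and> X \<union> Y = Es \<and>
            card X = (card Es + 1) div 2 \<and> card Y = (card Es - 1) div 2 \<and>
            (\<forall>e\<in>Es. \<forall>f\<in>Es. adm e f \<longleftrightarrow> (e \<in> X \<and> f \<in> Y \<or> e \<in> Y \<and> f \<in> X)))
       \<or> (\<exists>z X Y. z \<notin> X \<and> z \<notin> Y \<and> X \<inter> Y = {} \<and> insert z (X \<union> Y) = Es \<and> card X = card Y \<and>
            (\<forall>e\<in>Es. \<forall>f\<in>Es. adm e f \<longleftrightarrow> (e \<in> X \<and> f \<in> Y \<or> e \<in> Y \<and> f \<in> X)))"
proof -
  have "2 \<le> card I" using I(2) deg by simp
  then obtain X where X: "dangerous X" "\<forall>g\<in>I. nb g \<in> X"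
    using dangerous_cover[OF I(1) _ I(3)] deg by auto
  have "I \<subseteq> edges_into X" using I(1) X(2) by (auto simp: edges_into_def)
  then have "(card Es + 1) div 2 \<le> card (edges_into X)"
    using I(2) card_mono[of "edges_into X" I] finite_Es by (simp add: edges_into_def)
  then interpret lifting_with_dangerous_majority V E ends s A l X
    using X(1) odd deg by unfold_locales
  show ?thesis
  proof (cases "\<exists>g\<in>P. exceptional g")
    case False
    then have adm: "adm e f \<longleftrightarrow> (e \<in> P \<and> f \<in> Q \<or> e \<in> Q \<and> f \<in> P)"
      if "e \<in> Es" "f \<in> Es" for e f
      using adm_iff_across[OF that] by blast
    show ?thesis
      by (rule disjI1, rule exI[of _ P], rule exI[of _ Q]) (use adm P_Q_partition card_P card_Q in simp)
  next
    case True
    then obtain g where g: "g \<in> P" "exceptional g" by blast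
    then have adm: "adm e f \<longleftrightarrow> (e \<in> P - {g} \<and> f \<in> Q \<or> e \<in> Q \<and> f \<in> P - {g})"
      if "e \<in> Es" "f \<in> Es" for e f
      using adm_iff_across[OF that] exceptional_unique[OF g] by blast
    have card: "card (P - {g}) = card Q" using card_P card_Q g(1) finite_P odd by (auto elim!: oddE)
    have part: "g \<notin> Q" "insert g (P - {g} \<union> Q) = Es" using P_Q_partition g(1) by auto
    show ?thesis
      by (rule disjI2, rule exI[of _ g], rule exI[of _ "P - {g}"], rule exI[of _ Q])
        (use card part adm P_Q_partition in auto)
  qed
qed
end

theorem proposition4p5:
  fixes V :: "'v set" and E :: "'e set" and ends :: "'e \<Rightarrow> 'v set"
    and s :: 'v and A :: "'v set" and l :: nat
  assumes G: "multigraph V E ends"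
    and l4: "l \<ge> 4"
    and sV: "s \<in> V"
    and AV: "A \<subset> V" and sA: "s \<notin> A"
    and conn: "\<forall>x\<in>A. \<forall>y\<in>A. x \<noteq> y \<longrightarrow> edge_conn E ends x y \<ge> l"
    and noout: "\<forall>e\<in>E. ends e \<inter> A \<noteq> {}"
    and indep: "\<exists>I. I \<subseteq> {e\<in>E. s \<in> ends e} \<and> card I = (degree E ends s + 1) div 2 \<and>
                   (\<forall>e\<in>I. \<forall>f\<in>I. \<not> lift_adm V E ends s A l e f)"
    and odd: "odd (degree E ends s)" and deg5: "degree E ends s \<ge> 5"
  shows "(\<exists>X Y. X \<inter> Y = {} \<and> X \<union> Y = {e\<in>E. s \<in> ends e} \<and>
            card X = (degree E ends s + 1) div 2 \<and> card Y = (degree E ends s - 1) div 2 \<and>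
            (\<forall>e\<in>{e\<in>E. s \<in> ends e}. \<forall>f\<in>{e\<in>E. s \<in> ends e}.
               lift_adm V E ends s A l e f \<longleftrightarrow> (e \<in> X \<and> f \<in> Y \<or> e \<in> Y \<and> f \<in> X)))
       \<or> (\<exists>z X Y. z \<notin> X \<and> z \<notin> Y \<and> X \<inter> Y = {} \<and> insert z (X \<union> Y) = {e\<in>E. s \<in> ends e} \<and>
            card X = card Y \<and>
            (\<forall>e\<in>{e\<in>E. s \<in> ends e}. \<forall>f\<in>{e\<in>E. s \<in> ends e}.
               lift_adm V E ends s A l e f \<longleftrightarrow> (e \<in> X \<and> f \<in> Y \<or> e \<in> Y \<and> f \<in> X)))"
proof -
  interpret lifting_at_vertex V E ends s A l
    using G l4 AV sA conn noout by unfold_locales auto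
  have Es_eq: "{e\<in>E. s \<in> ends e} = Es" by (simp add: Es_def)
  have deg_eq: "degree E ends s = card Es" by (simp add: degree_def Es_def)
  from indep obtain I where I: "I \<subseteq> Es" "card I = (card Es + 1) div 2" "\<forall>e\<in>I. \<forall>f\<in>I. \<not> adm e f"
    unfolding Es_eq deg_eq by blast
  show ?thesis
    unfolding Es_eq deg_eq by (rule lifting_graph_structure[OF I odd[unfolded deg_eq] deg5[unfolded deg_eq]])
qed

end
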